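(* There is a sign $\epsilon = \pm 1$ such that the family $\epsilon\tilde{\alpha}_0 h', \dots, \epsilon\tilde{\alpha}_r h'$ is a uniform positive dual family to $\underline{a} = (au_0, \dots, au_r)$ in $L$. Therefore there exists a positive integer $l$ such that for all $0 \leq j \leq r$, $au_j(\epsilon\tilde{\alpha}_j h') = lt$ and $au_k(\epsilon\tilde{\alpha}_j h') = 0$ for $k \neq j$ (i.e. $\underline{a} \cdot (\epsilon\tilde{\underline{\alpha}} h') = lt I_{r+1}$). The value of $l$ is given by the following equality, which holds in $\mathbb{Z}$: $$\epsilon \lambda l t = \frac{\mathcal{N}(h')}{\mathcal{N}(L)} \tilde{\lambda} \tilde{t}.$$
   Context: Let $\mathbb{K}$ be a number field of degree $d = r+2 \geq 2$ with exactly one pair of complex embeddings, with embeddings ordered $\sigma_1, \dots, \sigma_r$ (real), $\sigma_{r+1}$ (complex) and $\sigma_{r+2} = \overline{\sigma_{r+1}}$. A $\mathbb{Q}$-basis $(e_1, \dots, e_d)$ of $\mathbb{K}$ is called positive if $i\cdot\det((\sigma_j(e_k))_{1 \leq j,k\leq d}) > 0$. Let $\mathfrak{f} \neq \mathcal{O}_{\mathbb{K}}$ be an integral ideal, $q\mathbb{Z} = \mathfrak{f} \cap \mathbb{Z}$, $\mathfrak{b}$ an integral ideal coprime to $\mathfrak{f}$, $L = \mathfrak{f}\mathfrak{b}^{-1}$, and $\mathfrak{a}$ an integral ideal coprime to $\mathfrak{f}\mathfrak{b}$ of norm $N$ with $\mathfrak{a}^{-1}L/L$ cyclic. Let $h \in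 L$ be admissible, i.e. $h/q \equiv 1 \bmod L$ and $h/N$ generates $\mathfrak{a}^{-1}L/L$. Write $h = mh'$ with $m$ a positive integer and $h'$ primitive in $L$. Let $u_1, \dots, u_r$ be totally positive units congruent to $1$ mod $\mathfrak{f}$ (obtained from a system of fundamental units of this group) such that $1, u_1, \dots, u_r$ are linearly independent; put $u_0 = 1$. Choose a positive $\mathbb{Z}$-basis $B_L = (e_0 = h', e_1, \dots, e_{r+1})$ of $L$ with $u_jh' = \sum_{k=0}^j c_{jk0}e_k$, $c_{jk0} \in \mathbb{Z}$, $c_{jj0} > 0$. Put $\lambda = \prod_{j=1}^r c_{jj0}$ and let $a \in \mathrm{Hom}_{\mathbb{Z}}(L, \mathbb{Z})$ be defined by $\lambda a = \det_{B_L}(h', u_1h', \dots, u_rh', \cdot)$; write $au_j$ for the linear form $x \mapsto a(u_jx)$. Let $\mathcal{A}$ be the square matrix of size $r+1$ of the coefficients of $au_0, \dots, au_r$ on the last $r+1$ vectors of the dual basis of $B_L$ (the first coefficients are all $0$), with Smith elementary divisors $[A_r, \dots, A_1, 1]$ ($A_i | A_{i+1}$), and put $t = A_r$. A positive dual family to $\underline{a}$ in $L$ is a family $\alpha_0, \dots, \alpha_r \in L$ with $au_j(\alpha_j) > 0$ and $au_k(\alpha_j) = 0$ for $k \neq j$; it is uniform if $au_j(\alpha_j)$ is independent of $j$. It is known (previous lemma) that for any uniform positive dual family $\alpha'$ with $au_j(\alpha'_j) = n$, $t$ divides $n$. Similarly, choose a positive basis $B_{\mathbb{K}} = (1, \tilde{e}_1,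 \dots, \tilde{e}_{r+1})$ of $\mathcal{O}_{\mathbb{K}}$ with $u_j = \sum_{k=0}^j \tilde{c}_{jk0}\tilde{e}_k$, $\tilde{c}_{jj0} > 0$; put $\tilde{\lambda} = \prod_{j=1}^r \tilde{c}_{jj0}$ and define $\tilde{a}$ by $\tilde{\lambda}\tilde{a} = \det_{B_{\mathbb{K}}}(1, u_1, \dots, u_r, \cdot)$. Let $\tilde{\mathcal{A}}$ be the analogous square matrix for $(\tilde{a}, \tilde{a}u_1, \dots, \tilde{a}u_r)$, with elementary divisors $[\tilde{A}_r, \dots, \tilde{A}_1, 1]$, and put $\tilde{t} = \tilde{A}_r$. Let $\tilde{\alpha}_0, \dots, \tilde{\alpha}_r \in \mathcal{O}_{\mathbb{K}}$ be given by the columns of $(\prod_{i=1}^r \tilde{A}_i^{-1})\mathrm{com}(\tilde{\mathcal{A}})^T$, so that $\tilde{a}u_j(\tilde{\alpha}_j) = \tilde{t}$ and $\tilde{a}u_k(\tilde{\alpha}_j) = 0$ for $k \neq j$. Here $\mathcal{N}(h')$ is the norm of the element $h'$ and $\mathcal{N}(L)$ the norm of the fractional ideal $L$. *)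

theory Defs
  imports Complex_Main "HOL-Computational_Algebra.Polynomial" "Jordan_Normal_Form.Determinant"
begin

definition is_subfield :: "complex set \<Rightarrow> bool" where
  "is_subfield K \<longleftrightarrow> 0 \<in> K \<and> 1 \<in> K \<and> (\<forall>x\<in>K. \<forall>y\<in>K. x + y \<in> K \<and> x * y \<in> K)
     \<and> (\<forall>x\<in>K. - x \<in> K \<and> inverse x \<in> K)"

definition Q_comb :: "complex list \<Rightarrow> (nat \<Rightarrow> rat) \<Rightarrow> complex" where
  "Q_comb es c = (\<Sum>k<length es. of_rat (c k) * es ! k)"

definition Z_comb :: "complex list \<Rightarrow> (nat \<Rightarrow> int) \<Rightarrow> complex" where
  "Z_comb es c = (\<Sum>k<length es. of_int (c k) * es ! k)"

definition Q_indep :: "complex list \<Rightarrow> bool" where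
  "Q_indep es \<longleftrightarrow> (\<forall>c. Q_comb es c = 0 \<longrightarrow> (\<forall>k<length es. c k = 0))"

definition Z_indep :: "complex list \<Rightarrow> bool" where
  "Z_indep es \<longleftrightarrow> (\<forall>c. Z_comb es c = 0 \<longrightarrow> (\<forall>k<length es. c k = 0))"

definition Q_span :: "complex list \<Rightarrow> complex set" where
  "Q_span es = range (Q_comb es)"

definition Z_span :: "complex list \<Rightarrow> complex set" where
  "Z_span es = range (Z_comb es)"

definition Z_basis :: "complex list \<Rightarrow> complex set \<Rightarrow> bool" where
  "Z_basis es S \<longleftrightarrow> Z_indep es \<and> Z_span es = S"

definition number_field_of_degree :: "complex set \<Rightarrow> nat \<Rightarrow> bool" where
  "number_field_of_degree K d \<longleftrightarrow> is_subfield K \<and>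
     (\<exists>es. length es = d \<and> set es \<subseteq> K \<and> Q_indep es \<and> Q_span es = K)"

definition is_embedding :: "complex set \<Rightarrow> (complex \<Rightarrow> complex) \<Rightarrow> bool" where
  "is_embedding K \<sigma> \<longleftrightarrow> \<sigma> 1 = 1 \<and>
     (\<forall>x\<in>K. \<forall>y\<in>K. \<sigma> (x + y) = \<sigma> x + \<sigma> y \<and> \<sigma> (x * y) = \<sigma> x * \<sigma> y)"

text \<open>The embeddings of K (degree r+2), indexed from 0: \<open>\<sigma> 0, \<dots>, \<sigma> (r-1)\<close> real,
  \<open>\<sigma> r\<close> complex (non-real) and \<open>\<sigma> (r+1)\<close> its complex conjugate.\<close>
definition embeddings_one_complex_pair ::
  "complex set \<Rightarrow> nat \<Rightarrow> (nat \<Rightarrow> complex \<Rightarrow> complex) \<Rightarrow> bool" where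
  "embeddings_one_complex_pair K r \<sigma> \<longleftrightarrow>
     (\<forall>j<r+2. is_embedding K (\<sigma> j))
   \<and> (\<forall>i<r+2. \<forall>j<r+2. i \<noteq> j \<longrightarrow> (\<exists>x\<in>K. \<sigma> i x \<noteq> \<sigma> j x))
   \<and> (\<forall>\<tau>. is_embedding K \<tau> \<longrightarrow> (\<exists>j<r+2. \<forall>x\<in>K. \<tau> x = \<sigma> j x))
   \<and> (\<forall>j<r. \<forall>x\<in>K. \<sigma> j x \<in> \<real>)
   \<and> (\<forall>x\<in>K. \<sigma> (r+1) x = cnj (\<sigma> r x))
   \<and> (\<exists>x\<in>K. \<sigma> r x \<notin> \<real>)"

definition alg_int :: "complex \<Rightarrow> bool" where
  "alg_int x \<longleftrightarrow> (\<exists>p :: int poly. lead_coeff p = 1 \<and> poly (map_poly of_int p) x = 0)"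

definition ring_of_integers :: "complex set \<Rightarrow> complex set" where
  "ring_of_integers K = {x \<in> K. alg_int x}"

definition is_ideal :: "complex set \<Rightarrow> complex set \<Rightarrow> bool" where
  "is_ideal OK I \<longleftrightarrow> I \<subseteq> OK \<and> 0 \<in> I \<and> (\<forall>x\<in>I. \<forall>y\<in>I. x + y \<in> I)
     \<and> (\<forall>r\<in>OK. \<forall>x\<in>I. r * x \<in> I)"

definition integral_ideal :: "complex set \<Rightarrow> complex set \<Rightarrow> bool" where
  "integral_ideal OK I \<longleftrightarrow> is_ideal OK I \<and> I \<noteq> {0}"

definition set_mult :: "complex set \<Rightarrow> complex set \<Rightarrow> complex set" where
  "set_mult I J = {sum_list (map2 (*) xs ys) | xs ys.
      length xs = length ys \<and> set xs \<subseteq> I \<and> set ys \<subseteq> J}"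

definition ideal_sum :: "complex set \<Rightarrow> complex set \<Rightarrow> complex set" where
  "ideal_sum I J = {x + y | x y. x \<in> I \<and> y \<in> J}"

definition coprime_ideals :: "complex set \<Rightarrow> complex set \<Rightarrow> complex set \<Rightarrow> bool" where
  "coprime_ideals OK I J \<longleftrightarrow> ideal_sum I J = OK"

definition frac_inv :: "complex set \<Rightarrow> complex set \<Rightarrow> complex set \<Rightarrow> complex set" where
  "frac_inv K OK I = {x \<in> K. \<forall>y\<in>I. x * y \<in> OK}"

definition ideal_index :: "complex set \<Rightarrow> complex set \<Rightarrow> nat" where
  "ideal_index OK I = card ((\<lambda>x. {y \<in> OK. y - x \<in> I}) ` OK)"

text \<open>Norm of a fractional ideal I of a number field of degree d:
  \<open>N(I) = [O : cI] / c^d\<close> for the least positive integer c with \<open>cI \<subseteq> O\<close>.\<close>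
definition frac_ideal_norm :: "complex set \<Rightarrow> nat \<Rightarrow> complex set \<Rightarrow> real" where
  "frac_ideal_norm OK d I =
     (let c = (LEAST c::nat. c > 0 \<and> (\<forall>x\<in>I. of_nat c * x \<in> OK))
      in real (ideal_index OK ((\<lambda>x. of_nat c * x) ` I)) / real c ^ d)"

text \<open>\<open>M/L\<close> is cyclic (as additive group), for \<open>L \<subseteq> M\<close>.\<close>
definition cyclic_quot :: "complex set \<Rightarrow> complex set \<Rightarrow> bool" where
  "cyclic_quot M L \<longleftrightarrow> (\<exists>g\<in>M. \<forall>x\<in>M. \<exists>k::int. x - of_int k * g \<in> L)"

text \<open>h admissible: \<open>h \<in> L\<close>, \<open>h/q \<equiv> 1 mod L\<close>, and \<open>h/N\<close> generates \<open>a\<^sup>-\<^sup>1L/L\<close>.\<close>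
definition admissible ::
  "complex set \<Rightarrow> complex set \<Rightarrow> int \<Rightarrow> nat \<Rightarrow> complex \<Rightarrow> bool" where
  "admissible L aL q N h \<longleftrightarrow> h \<in> L \<and> h / of_int q - 1 \<in> L \<and> h / of_nat N \<in> aL
     \<and> (\<forall>x\<in>aL. \<exists>k::int. x - of_int k * (h / of_nat N) \<in> L)"

definition primitive_in :: "complex set \<Rightarrow> complex \<Rightarrow> bool" where
  "primitive_in L x \<longleftrightarrow> x \<in> L \<and> x \<noteq> 0 \<and> (\<forall>n::int. \<forall>y\<in>L. x = of_int n * y \<longrightarrow> \<bar>n\<bar> = 1)"

definition elt_norm :: "(nat \<Rightarrow> complex \<Rightarrow> complex) \<Rightarrow> nat \<Rightarrow> complex \<Rightarrow> complex" where
  "elt_norm \<sigma> d x = (\<Prod>j<d. \<sigma> j x)"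

definition totally_positive :: "(nat \<Rightarrow> complex \<Rightarrow> complex) \<Rightarrow> nat \<Rightarrow> complex \<Rightarrow> bool" where
  "totally_positive \<sigma> r x \<longleftrightarrow> (\<forall>j<r. \<sigma> j x \<in> \<real> \<and> Re (\<sigma> j x) > 0)"

definition is_unit_of :: "complex set \<Rightarrow> complex \<Rightarrow> bool" where
  "is_unit_of OK x \<longleftrightarrow> x \<in> OK \<and> x \<noteq> 0 \<and> inverse x \<in> OK"

definition positive_basis :: "(nat \<Rightarrow> complex \<Rightarrow> complex) \<Rightarrow> nat \<Rightarrow> complex list \<Rightarrow> bool" where
  "positive_basis \<sigma> d es \<longleftrightarrow> length es = d \<and>
     (let D = det (mat d d (\<lambda>(j, k). \<sigma> j (es ! k))) in \<i> * D \<in> \<real> \<and> Re (\<i> * D) > 0)"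

definition coord :: "complex list \<Rightarrow> complex \<Rightarrow> nat \<Rightarrow> rat" where
  "coord es x = (THE c. (\<forall>k. length es \<le> k \<longrightarrow> c k = 0) \<and> Q_comb es c = x)"

definition det_wrt :: "complex list \<Rightarrow> complex list \<Rightarrow> rat" where
  "det_wrt es vs = det (mat (length es) (length es) (\<lambda>(i, k). coord es (vs ! k) i))"

definition triangular_wrt :: "complex list \<Rightarrow> (nat \<Rightarrow> complex) \<Rightarrow> nat \<Rightarrow> complex \<Rightarrow> bool" where
  "triangular_wrt es u r g \<longleftrightarrow> es ! 0 = g \<and>
     (\<forall>j\<in>{1..r}. coord es (u j * g) j > 0 \<and> (\<forall>k. j < k \<longrightarrow> coord es (u j * g) k = 0))"

definition lam_wrt :: "complex list \<Rightarrow> (nat \<Rightarrow> complex) \<Rightarrow> nat \<Rightarrow> complex \<Rightarrow> rat" where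
  "lam_wrt es u r g = (\<Prod>j\<in>{1..r}. coord es (u j * g) j)"

text \<open>The linear form a defined by \<open>\<lambda> a = det_B(g, u_1 g, \<dots>, u_r g, \<cdot>)\<close> (with \<open>u_0 = 1\<close>).\<close>
definition lin_form ::
  "complex list \<Rightarrow> (nat \<Rightarrow> complex) \<Rightarrow> nat \<Rightarrow> complex \<Rightarrow> rat \<Rightarrow> complex \<Rightarrow> rat" where
  "lin_form es u r g lam x = det_wrt es (map (\<lambda>j. u j * g) [0..<r+1] @ [x]) / lam"

text \<open>Matrix of the coefficients of \<open>au_0,\<dots>,au_r\<close> on the last r+1 dual basis vectors.\<close>
definition coeff_mat :: "complex list \<Rightarrow> (nat \<Rightarrow> complex) \<Rightarrow> nat \<Rightarrow> (complex \<Rightarrow> rat) \<Rightarrow> rat mat" where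
  "coeff_mat es u r af = mat (r+1) (r+1) (\<lambda>(j, k). af (u j * es ! (k+1)))"

definition smith_elementary_divisors :: "rat mat \<Rightarrow> nat \<Rightarrow> (nat \<Rightarrow> int) \<Rightarrow> bool" where
  "smith_elementary_divisors M n D \<longleftrightarrow>
     (\<exists>P Q. P \<in> carrier_mat n n \<and> Q \<in> carrier_mat n n
        \<and> (\<forall>i<n. \<forall>j<n. P $$ (i, j) \<in> \<int> \<and> Q $$ (i, j) \<in> \<int>)
        \<and> det P \<in> {1, -1} \<and> det Q \<in> {1, -1}
        \<and> P * M * Q = mat n n (\<lambda>(i, j). if i = j then of_int (D i) else 0))
   \<and> (\<forall>i<n. 0 \<le> D i) \<and> (\<forall>i. Suc i < n \<longrightarrow> D i dvd D (Suc i))"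

definition pos_dual_family ::
  "complex set \<Rightarrow> (nat \<Rightarrow> complex \<Rightarrow> rat) \<Rightarrow> nat \<Rightarrow> (nat \<Rightarrow> complex) \<Rightarrow> bool" where
  "pos_dual_family L af r \<alpha> \<longleftrightarrow>
     (\<forall>j\<le>r. \<alpha> j \<in> L \<and> af j (\<alpha> j) > 0 \<and> (\<forall>k\<le>r. k \<noteq> j \<longrightarrow> af k (\<alpha> j) = 0))"

definition uniform_pos_dual_family ::
  "complex set \<Rightarrow> (nat \<Rightarrow> complex \<Rightarrow> rat) \<Rightarrow> nat \<Rightarrow> (nat \<Rightarrow> complex) \<Rightarrow> bool" where
  "uniform_pos_dual_family L af r \<alpha> \<longleftrightarrow> pos_dual_family L af r \<alpha>
     \<and> (\<forall>j\<le>r. \<forall>k\<le>r. af j (\<alpha> j) = af k (\<alpha> k))"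

end

theory Submission
  imports Defs
begin

text \<open>
  Let \<open>\<delta>\<close> be the determinant of multiplication by \<open>h'\<close> from the basis \<open>eK\<close> of \<open>\<O>\<^sub>K\<close> to the
  basis \<open>eL\<close> of \<open>L\<close>. As \<open>det\<^sub>B\<close> is multiplicative under change of basis,
  \<open>lam * alin (h' * v) = \<delta> * lamt * alint v\<close> for all \<open>v \<in> K\<close>. So with \<open>\<epsilon> = sgn \<delta>\<close> the family
  \<open>\<epsilon> * \<alpha>t j * h'\<close> is a uniform positive dual family with value \<open>|\<delta>| * lamt * tt / lam\<close>. This value
  is an integer, being a coordinate of a lattice vector, and a multiple of \<open>t\<close>, since
  \<open>\<A> Y = n I\<close> for the integral coordinate matrix \<open>Y\<close> of the family.

  It remains to show \<open>\<delta> = \<N>(h') / \<N>(L)\<close>. Computing the embedding matrix \<open>(\<sigma>\<^sub>j (h' f\<^sub>k))\<close> in two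
  ways gives \<open>\<N>(h') det(\<sigma>\<^sub>j f\<^sub>k) = \<delta> det(\<sigma>\<^sub>j e\<^sub>k)\<close>, and
  \<open>\<N>(L) = [\<O>\<^sub>K : cL] / c\<^sup>d = det(\<sigma>\<^sub>j e\<^sub>k) / det(\<sigma>\<^sub>j f\<^sub>k)\<close> because the index of a full sublattice is
  the absolute value of its determinant (bring the generators to triangular form by integral column
  operations), the sign being fixed by the positivity of both bases.
\<close>

section \<open>Coordinates and lattices in a number field\<close>

lemma subfield_0: "is_subfield K \<Longrightarrow> 0 \<in> K"
  and subfield_1: "is_subfield K \<Longrightarrow> 1 \<in> K"
  and subfield_add: "is_subfield K \<Longrightarrow> x \<in> K \<Longrightarrow> y \<in> K \<Longrightarrow> x + y \<in> K"
  and subfield_mult: "is_subfield K \<Longrightarrow> x \<in> K \<Longrightarrow> y \<in> K \<Longrightarrow> x * y \<in> K"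
  and subfield_uminus: "is_subfield K \<Longrightarrow> x \<in> K \<Longrightarrow> - x \<in> K"
  and subfield_inverse: "is_subfield K \<Longrightarrow> x \<in> K \<Longrightarrow> inverse x \<in> K"
  unfolding is_subfield_def by auto

lemma subfield_divide: "is_subfield K \<Longrightarrow> x \<in> K \<Longrightarrow> y \<in> K \<Longrightarrow> x / y \<in> K"
  by (simp add: divide_inverse subfield_inverse subfield_mult)

lemma subfield_of_nat: "is_subfield K \<Longrightarrow> of_nat n \<in> K"
  by (induct n) (auto intro: subfield_add subfield_0 subfield_1)

lemma subfield_of_int: "is_subfield K \<Longrightarrow> of_int k \<in> K"
  using subfield_of_nat[of K "nat k"] subfield_of_nat[of K "nat (- k)"]
    subfield_uminus[of K "of_nat (nat (- k))"]
  by (cases "k \<ge> 0") simp_all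

lemma of_rat_eq_quotient: "(of_rat q :: 'a :: field_char_0) = of_int (fst (quotient_of q)) / of_int (snd (quotient_of q))"
proof -
  obtain a b where ab: "quotient_of q = (a, b)" by (cases "quotient_of q")
  then show ?thesis using quotient_of_div[OF ab] by (simp add: of_rat_divide)
qed

lemma subfield_of_rat: "is_subfield K \<Longrightarrow> of_rat q \<in> K"
  unfolding of_rat_eq_quotient by (intro subfield_divide subfield_of_int)

lemma subfield_sum: "is_subfield K \<Longrightarrow> (\<And>i. i \<in> A \<Longrightarrow> f i \<in> K) \<Longrightarrow> sum f A \<in> K"
  by (induct A rule: infinite_finite_induct) (auto intro: subfield_add subfield_0)

lemma finite_common_denominator:
  assumes "finite A"
  shows "\<exists>D::int. D > 0 \<and> (\<forall>a\<in>A. of_int D * f a \<in> (\<int> :: rat set))"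
proof (intro exI conjI ballI)
  define D where "D = (\<Prod>a\<in>A. snd (quotient_of (f a)))"
  show "D > 0" unfolding D_def by (intro prod_pos) (simp add: quotient_of_denom_pos')
  fix a assume "a \<in> A"
  then obtain e where e: "D = snd (quotient_of (f a)) * e"
    unfolding D_def using assms by (metis dvd_prodI dvdE)
  obtain n b where nb: "quotient_of (f a) = (n, b)" by (cases "quotient_of (f a)")
  then have "b > 0" "f a = of_int n / of_int b" by (simp_all add: quotient_of_denom_pos quotient_of_div)
  then have "of_int D * f a = of_int (n * e)" using e nb by simp
  then show "of_int D * f a \<in> \<int>" by simp
qed

lemma Q_comb_in: "is_subfield K \<Longrightarrow> set es \<subseteq> K \<Longrightarrow> Q_comb es c \<in> K"
  unfolding Q_comb_def by (intro subfield_sum) (auto intro!: subfield_mult subfield_of_rat)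

lemma Q_comb_add: "Q_comb es (\<lambda>k. c k + c' k) = Q_comb es c + Q_comb es c'"
  unfolding Q_comb_def by (simp add: of_rat_add distrib_right sum.distrib)

lemma Q_comb_diff: "Q_comb es (\<lambda>k. c k - c' k) = Q_comb es c - Q_comb es c'"
  unfolding Q_comb_def by (simp add: of_rat_diff left_diff_distrib sum_subtractf)

lemma Q_comb_scale: "Q_comb es (\<lambda>k. a * c k) = of_rat a * Q_comb es c"
  unfolding Q_comb_def by (simp add: of_rat_mult sum_distrib_left mult.assoc)

lemma Q_comb_cong: "(\<And>k. k < length es \<Longrightarrow> c k = c' k) \<Longrightarrow> Q_comb es c = Q_comb es c'"
  unfolding Q_comb_def by simp

lemma Q_comb_zero: "Q_comb es (\<lambda>k. 0) = 0"
  unfolding Q_comb_def by simp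

lemma Q_comb_delta: "j < length es \<Longrightarrow> Q_comb es (\<lambda>k. if k = j then 1 else 0) = es ! j"
proof -
  assume j: "j < length es"
  have "(\<lambda>k. of_rat (if k = j then 1 else 0) * es ! k) = (\<lambda>k. if k = j then es ! k else 0)"
    by auto
  then show ?thesis unfolding Q_comb_def using j by (simp only:) simp
qed

lemma coord_Q_comb:
  assumes ind: "Q_indep es"
  shows "coord es (Q_comb es c) = (\<lambda>k. if k < length es then c k else 0)"
  unfolding coord_def
proof (rule the_equality)
  let ?c = "\<lambda>k. if k < length es then c k else 0"
  show P: "(\<forall>k. length es \<le> k \<longrightarrow> ?c k = 0) \<and> Q_comb es ?c = Q_comb es c"
    by (auto intro: Q_comb_cong)
  fix c' assume c': "(\<forall>k. length es \<le> k \<longrightarrow> c' k = 0) \<and> Q_comb es c' = Q_comb es c"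
  have "Q_comb es (\<lambda>k. c' k - ?c k) = 0"
    using c' P by (simp add: Q_comb_diff)
  then have "\<forall>k<length es. c' k - ?c k = 0" using ind unfolding Q_indep_def by blast
  then show "c' = ?c" using c' by (auto simp: fun_eq_iff)
qed

lemma coord_basis: "Q_indep es \<Longrightarrow> j < length es \<Longrightarrow> coord es (es ! j) k = (if k = j then 1 else 0)"
  using coord_Q_comb[of es "\<lambda>k. if k = j then 1 else 0"] by (simp add: Q_comb_delta)

lemma Q_comb_coord: "Q_indep es \<Longrightarrow> x \<in> Q_span es \<Longrightarrow> Q_comb es (coord es x) = x"
  unfolding Q_span_def by (auto simp: coord_Q_comb intro: Q_comb_cong)

lemma coord_add: "Q_indep es \<Longrightarrow> x \<in> Q_span es \<Longrightarrow> y \<in> Q_span es \<Longrightarrow>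
   coord es (x + y) k = coord es x k + coord es y k"
  unfolding Q_span_def by (auto simp: coord_Q_comb Q_comb_add[symmetric])

lemma coord_scale: "Q_indep es \<Longrightarrow> x \<in> Q_span es \<Longrightarrow>
   coord es (of_rat a * x) k = a * coord es x k"
  unfolding Q_span_def by (auto simp: coord_Q_comb Q_comb_scale[symmetric])

lemma coord_int_mult: "Q_indep es \<Longrightarrow> x \<in> Q_span es \<Longrightarrow>
   coord es (of_int a * x) k = of_int a * coord es x k"
  using coord_scale[of es x "of_int a" k] by simp

lemma Q_span_add: "x \<in> Q_span es \<Longrightarrow> y \<in> Q_span es \<Longrightarrow> x + y \<in> Q_span es"
  unfolding Q_span_def by (auto simp: Q_comb_add[symmetric])

lemma Q_span_scale: "x \<in> Q_span es \<Longrightarrow> of_rat a * x \<in> Q_span es"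
  unfolding Q_span_def by (auto simp: Q_comb_scale[symmetric])

lemma Q_span_nth: "j < length es \<Longrightarrow> es ! j \<in> Q_span es"
  unfolding Q_span_def by (metis Q_comb_delta rangeI)

lemma Q_span_0: "0 \<in> Q_span es"
  unfolding Q_span_def using Q_comb_zero by (metis rangeI)

lemma Q_span_sum: "(\<And>i. i \<in> A \<Longrightarrow> f i \<in> Q_span es) \<Longrightarrow> sum f A \<in> Q_span es"
  by (induct A rule: infinite_finite_induct) (auto intro: Q_span_add Q_span_0)

lemma coord_sum:
  assumes "Q_indep es" "\<And>i. i \<in> A \<Longrightarrow> f i \<in> Q_span es"
  shows "coord es (sum f A) k = (\<Sum>i\<in>A. coord es (f i) k)"
  using assms(2)
proof (induct A rule: infinite_finite_induct)
  case (insert a A)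
  then show ?case using assms(1) by (simp add: coord_add Q_span_sum)
qed (use assms(1) coord_Q_comb[of es "\<lambda>_. 0"] in \<open>simp_all add: Q_comb_zero\<close>)

lemma coord_mult_expand:
  assumes qA: "Q_indep eA" and qB: "Q_indep eB" and v: "v \<in> Q_span eB"
    and img: "\<And>l. l < length eB \<Longrightarrow> h * eB ! l \<in> Q_span eA"
  shows "coord eA (h * v) i = (\<Sum>l<length eB. coord eA (h * eB ! l) i * coord eB v l)"
proof -
  have "h * v = h * Q_comb eB (coord eB v)" using Q_comb_coord[OF qB v] by simp
  also have "\<dots> = (\<Sum>l<length eB. of_rat (coord eB v l) * (h * eB ! l))"
    unfolding Q_comb_def by (simp add: sum_distrib_left algebra_simps)
  finally have e: "h * v = (\<Sum>l<length eB. of_rat (coord eB v l) * (h * eB ! l))" .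
  show ?thesis unfolding e
    by (subst coord_sum[OF qA]) (auto intro!: Q_span_scale img sum.cong simp: coord_scale[OF qA img])
qed

lemma coord_Q_comb_map_mult:
  assumes qi: "Q_indep es" and uy: "\<And>j. j < n \<Longrightarrow> u j * y \<in> Q_span es"
  shows "coord es (Q_comb (map u [0..<n]) c * y) i = (\<Sum>j<n. c j * coord es (u j * y) i)"
proof -
  have e: "Q_comb (map u [0..<n]) c * y = (\<Sum>j<n. of_rat (c j) * (u j * y))"
    unfolding Q_comb_def sum_distrib_right by (intro sum.cong) (simp_all add: mult.assoc)
  show ?thesis unfolding e
    by (subst coord_sum[OF qi]) (auto intro!: Q_span_scale uy sum.cong simp: coord_scale[OF qi uy])
qed

lemma Z_comb_Q_comb: "Z_comb es z = Q_comb es (\<lambda>k. of_int (z k))"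
  unfolding Z_comb_def Q_comb_def by simp

lemma Z_span_subset_Q_span: "Z_span es \<subseteq> Q_span es"
  unfolding Z_span_def Q_span_def by (auto simp: Z_comb_Q_comb)

lemma Z_indep_imp_Q_indep:
  assumes "Z_indep es"
  shows "Q_indep es"
  unfolding Q_indep_def
proof (rule allI, rule impI)
  fix c assume c: "Q_comb es c = 0"
  obtain D where D: "D > 0" "\<forall>k\<in>{..<length es}. of_int D * c k \<in> \<int>"
    using finite_common_denominator[of "{..<length es}" c] by auto
  define z where "z k = \<lfloor>of_int D * c k\<rfloor>" for k
  have z: "of_int (z k) = of_int D * c k" if "k < length es" for k
    using D(2) that unfolding z_def by (auto elim!: Ints_cases)
  have "Z_comb es z = Q_comb es (\<lambda>k. of_int D * c k)"
    unfolding Z_comb_Q_comb by (rule Q_comb_cong) (simp add: z)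
  also have "\<dots> = 0" by (simp add: Q_comb_scale c)
  finally have "\<forall>k<length es. z k = 0" using assms unfolding Z_indep_def by blast
  then show "\<forall>k<length es. c k = 0" using z D(1) by force
qed

lemma coord_Z_span: "Q_indep es \<Longrightarrow> x \<in> Z_span es \<Longrightarrow> coord es x k \<in> \<int>"
  unfolding Z_span_def by (auto simp: Z_comb_Q_comb coord_Q_comb)

lemma Z_span_if_coord_Ints:
  assumes ind: "Q_indep es" and x: "x \<in> Q_span es"
    and int: "\<And>k. k < length es \<Longrightarrow> coord es x k \<in> \<int>"
  shows "x \<in> Z_span es"
proof -
  have "Z_comb es (\<lambda>k. \<lfloor>coord es x k\<rfloor>) = Q_comb es (coord es x)"
    unfolding Z_comb_Q_comb
  proof (rule Q_comb_cong)
    fix k assume "k < length es"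
    then show "of_int \<lfloor>coord es x k\<rfloor> = coord es x k" using int by (auto elim!: Ints_cases)
  qed
  then show ?thesis using Q_comb_coord[OF ind x] unfolding Z_span_def by (metis rangeI)
qed

lemma Z_span_add: "x \<in> Z_span es \<Longrightarrow> y \<in> Z_span es \<Longrightarrow> x + y \<in> Z_span es"
proof -
  assume "x \<in> Z_span es" "y \<in> Z_span es"
  then obtain a b where "x = Z_comb es a" "y = Z_comb es b" unfolding Z_span_def by auto
  then have "x + y = Z_comb es (\<lambda>k. a k + b k)"
    unfolding Z_comb_def by (simp add: distrib_right sum.distrib)
  then show ?thesis unfolding Z_span_def by simp
qed

lemma Z_span_int_mult: "x \<in> Z_span es \<Longrightarrow> of_int n * x \<in> Z_span es"
proof -
  assume "x \<in> Z_span es"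
  then obtain a where "x = Z_comb es a" unfolding Z_span_def by auto
  then have "of_int n * x = Z_comb es (\<lambda>k. n * a k)"
    unfolding Z_comb_def by (simp add: sum_distrib_left mult.assoc)
  then show ?thesis unfolding Z_span_def by simp
qed

lemma Z_span_0: "0 \<in> Z_span es"
proof -
  have "Z_comb es (\<lambda>_. 0) = 0" unfolding Z_comb_def by simp
  then show ?thesis unfolding Z_span_def by (metis rangeI)
qed

lemma Z_span_diff: "x \<in> Z_span es \<Longrightarrow> y \<in> Z_span es \<Longrightarrow> x - y \<in> Z_span es"
  using Z_span_add[of x es "of_int (-1) * y"] Z_span_int_mult[of y es "-1"] by simp

lemma Z_span_sum: "(\<And>i. i \<in> A \<Longrightarrow> f i \<in> Z_span es) \<Longrightarrow> sum f A \<in> Z_span es"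
  by (induct A rule: infinite_finite_induct) (auto intro: Z_span_add Z_span_0)

lemma Z_span_nth: "j < length es \<Longrightarrow> es ! j \<in> Z_span es"
proof -
  assume j: "j < length es"
  have "Z_comb es (\<lambda>k. if k = j then 1 else 0) = Q_comb es (\<lambda>k. if k = j then 1 else 0)"
    unfolding Z_comb_Q_comb by (rule Q_comb_cong) simp
  also have "\<dots> = es ! j" using Q_comb_delta[OF j] .
  finally show ?thesis unfolding Z_span_def by (metis rangeI)
qed

lemma set_subset_Z_span: "set es \<subseteq> Z_span es"
  by (auto simp: in_set_conv_nth Z_span_nth)

lemma Z_span_mono: "set gs \<subseteq> Z_span es \<Longrightarrow> Z_span gs \<subseteq> Z_span es"
proof
  fix x assume s: "set gs \<subseteq> Z_span es" and "x \<in> Z_span gs"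
  then obtain z where x: "x = Z_comb gs z" unfolding Z_span_def by auto
  show "x \<in> Z_span es" unfolding x Z_comb_def
    by (rule Z_span_sum) (use s nth_mem in \<open>auto intro!: Z_span_int_mult\<close>)
qed

lemma Z_span_scaled_basis:
  "Z_span (map (\<lambda>e. of_int c * e) es) = (\<lambda>x. of_int c * x) ` Z_span es"
proof -
  have "Z_comb (map (\<lambda>e. of_int c * e) es) z = of_int c * Z_comb es z" for z
    unfolding Z_comb_def by (simp add: sum_distrib_left algebra_simps)
  then show ?thesis unfolding Z_span_def by auto
qed

lemma rat_vector_space: "vector_space (\<lambda>q (x::complex). of_rat q * x)"
  unfolding vector_space_def by (auto simp: algebra_simps of_rat_add of_rat_mult)

lemma rat_module: "Modules.module (\<lambda>q (x::complex). of_rat q * x)"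
  using rat_vector_space by (simp add: Vector_Spaces.module_iff_vector_space)

lemma Q_indep_distinct:
  assumes ind: "Q_indep es"
  shows "distinct es"
proof (rule ccontr)
  assume "\<not> distinct es"
  then obtain i j where ij: "i < length es" "j < length es" "i \<noteq> j" "es ! i = es ! j"
    by (auto simp: distinct_conv_nth)
  define c where "c k = (if k = i then 1 else 0) - (if k = j then 1 else (0::rat))" for k
  have "Q_comb es c = 0"
    unfolding c_def Q_comb_diff Q_comb_delta[OF ij(1)] Q_comb_delta[OF ij(2)] using ij by simp
  then show False using ind ij unfolding Q_indep_def c_def by force
qed

lemma sum_set_distinct: "distinct es \<Longrightarrow> (\<Sum>v\<in>set es. f v) = (\<Sum>k<length es. f (es ! k))"
  by (subst sum.distinct_set_conv_list) (simp_all add: sum_list_sum_nth atLeast0LessThan)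

lemma rat_span_eq_Q_span:
  assumes d: "distinct es"
  shows "Modules.module.span (\<lambda>q (x::complex). of_rat q * x) (set es) = Q_span es"
proof -
  have "Modules.module.span (\<lambda>q (x::complex). of_rat q * x) (set es)
      = range (\<lambda>u. \<Sum>v\<in>set es. of_rat (u v) * v)"
    using Modules.module.span_finite[OF rat_module, of "set es"] by simp
  also have "\<dots> = range (\<lambda>u. Q_comb es (u \<circ> (!) es))"
    unfolding Q_comb_def sum_set_distinct[OF d] by simp
  also have "\<dots> = Q_span es"
  proof -
    have "Q_comb es c = Q_comb es ((c \<circ> inv_into {..<length es} ((!) es)) \<circ> (!) es)" for c
      by (rule Q_comb_cong) (simp add: inv_into_f_f inj_on_nth[OF d])
    then show ?thesis unfolding Q_span_def by auto
  qed
  finally show ?thesis .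
qed

lemma Q_indep_imp_independent:
  assumes ind: "Q_indep es"
  shows "\<not> Modules.module.dependent (\<lambda>q (x::complex). of_rat q * x) (set es)"
proof
  assume "Modules.module.dependent (\<lambda>q (x::complex). of_rat q * x) (set es)"
  then obtain u where u: "\<exists>v\<in>set es. u v \<noteq> 0" "(\<Sum>v\<in>set es. of_rat (u v) * v) = 0"
    using Modules.module.dependent_finite[OF rat_module, of "set es"] by auto
  have "Q_comb es (\<lambda>k. u (es ! k)) = 0"
    using u(2) unfolding Q_comb_def sum_set_distinct[OF Q_indep_distinct[OF ind]] .
  then have "\<forall>k<length es. u (es ! k) = 0" using ind unfolding Q_indep_def by blast
  then show False using u(1) by (auto simp: set_conv_nth)
qed

lemma Q_span_eq_field:
  assumes nf: "number_field_of_degree K d" and len: "length es = d" and sub: "set es \<subseteq> K"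
    and ind: "Q_indep es"
  shows "Q_span es = K"
proof
  have sf: "is_subfield K" using nf unfolding number_field_of_degree_def by simp
  show "Q_span es \<subseteq> K" unfolding Q_span_def using Q_comb_in[OF sf sub] by auto
  obtain bs where bs: "length bs = d" "set bs \<subseteq> K" "Q_indep bs" "Q_span bs = K"
    using nf unfolding number_field_of_degree_def by blast
  show "K \<subseteq> Q_span es"
  proof
    fix x assume xK: "x \<in> K"
    show "x \<in> Q_span es"
    proof (rule ccontr)
      assume nx: "x \<notin> Q_span es"
      have de: "distinct es" and db: "distinct bs"
        using Q_indep_distinct ind bs(3) by auto
      have "\<not> Modules.module.dependent (\<lambda>q (x::complex). of_rat q * x) (insert x (set es))"
        using vector_space.independent_insertI[OF rat_vector_space] Q_indep_imp_independent[OF ind]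
          nx rat_span_eq_Q_span[OF de] by blast
      moreover have "insert x (set es) \<subseteq> Modules.module.span (\<lambda>q (x::complex). of_rat q * x) (set bs)"
        using rat_span_eq_Q_span[OF db] bs(4) xK sub by auto
      ultimately have "card (insert x (set es)) \<le> card (set bs)"
        using vector_space.independent_span_bound[OF rat_vector_space] by blast
      moreover have "x \<notin> set es" using nx by (metis Q_comb_delta Q_span_def in_set_conv_nth rangeI)
      ultimately show False using de db bs(1) len by (simp add: distinct_card)
    qed
  qed
qed

lemma Z_basis_imp_Q_basis:
  assumes "number_field_of_degree K d" "Z_basis es S" "S \<subseteq> K" "length es = d"
  shows "Q_indep es" "Q_span es = K"
proof -
  show qi: "Q_indep es" using assms(2) Z_indep_imp_Q_indep unfolding Z_basis_def by blast
  have "set es \<subseteq> K" using set_subset_Z_span[of es] assms(2,3) unfolding Z_basis_def by blast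
  then show "Q_span es = K" using Q_span_eq_field[OF assms(1,4) _ qi] by blast
qed

context
  fixes K :: "complex set" and \<sigma> :: "complex \<Rightarrow> complex"
  assumes sf: "is_subfield K" and emb: "is_embedding K \<sigma>"
begin

lemma embedding_add: "x \<in> K \<Longrightarrow> y \<in> K \<Longrightarrow> \<sigma> (x + y) = \<sigma> x + \<sigma> y"
  and embedding_mult: "x \<in> K \<Longrightarrow> y \<in> K \<Longrightarrow> \<sigma> (x * y) = \<sigma> x * \<sigma> y"
  and embedding_1: "\<sigma> 1 = 1"
  using emb unfolding is_embedding_def by auto

lemma embedding_0: "\<sigma> 0 = 0"
  using embedding_add[OF subfield_0[OF sf] subfield_0[OF sf]] by simp

lemma embedding_sum: "(\<And>i. i \<in> A \<Longrightarrow> f i \<in> K) \<Longrightarrow> \<sigma> (sum f A) = (\<Sum>i\<in>A. \<sigma> (f i))"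
  by (induct A rule: infinite_finite_induct)
    (simp_all add: embedding_0 embedding_add subfield_sum[OF sf])

lemma embedding_of_nat: "\<sigma> (of_nat n) = of_nat n"
  using embedding_sum[of "{..<n}" "\<lambda>_. 1"] subfield_1[OF sf] embedding_1 by simp

lemma embedding_of_int: "\<sigma> (of_int k) = of_int k"
proof -
  have "\<sigma> (of_int k) + \<sigma> (of_nat (nat (- k))) = \<sigma> (of_nat (nat k))"
    using embedding_add[OF subfield_of_int[OF sf] subfield_of_nat[OF sf], of k "nat (- k)"]
    by (cases "k \<ge> 0") simp_all
  then show ?thesis unfolding embedding_of_nat by (cases "k \<ge> 0") simp_all
qed

lemma embedding_of_rat: "\<sigma> (of_rat q) = of_rat q"
proof -
  obtain a b where ab: "quotient_of q = (a, b)" by (cases "quotient_of q")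
  then have q: "q = of_int a / of_int b" and b: "b > 0"
    by (auto simp: quotient_of_div quotient_of_denom_pos)
  have "(of_int b :: complex) * of_rat q = of_int a" using q b by (simp add: of_rat_divide)
  then have "\<sigma> (of_int b * of_rat q) = of_int a" using embedding_of_int by simp
  then have "of_int b * \<sigma> (of_rat q) = of_int a"
    using embedding_mult[OF subfield_of_int[OF sf] subfield_of_rat[OF sf]] embedding_of_int by simp
  then have "\<sigma> (of_rat q) = of_int a / of_int b" using b by (simp add: field_simps)
  then show ?thesis using q by (simp add: of_rat_divide)
qed

lemma embedding_Q_comb:
  "set es \<subseteq> K \<Longrightarrow> \<sigma> (Q_comb es c) = (\<Sum>k<length es. of_rat (c k) * \<sigma> (es ! k))"
proof -
  assume es: "set es \<subseteq> K"
  then have e: "es ! k \<in> K" if "k < length es" for k using that nth_mem by blast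
  show ?thesis unfolding Q_comb_def
    by (subst embedding_sum)
      (auto intro!: subfield_mult[OF sf] subfield_of_rat[OF sf] e sum.cong
        simp: embedding_mult[OF subfield_of_rat[OF sf] e] embedding_of_rat)
qed

lemma embedding_nonzero: "x \<in> K \<Longrightarrow> x \<noteq> 0 \<Longrightarrow> \<sigma> x \<noteq> 0"
proof
  assume x: "x \<in> K" "x \<noteq> 0" and "\<sigma> x = 0"
  then have "\<sigma> (x * inverse x) = 0" using embedding_mult[OF x(1) subfield_inverse[OF sf x(1)]] by simp
  then show False using x embedding_1 by simp
qed

end

lemma set_mult_absorb:
  assumes I: "is_ideal OK I" and a: "a \<in> OK" and x: "x \<in> set_mult I J"
  shows "a * x \<in> set_mult I J"
proof -
  obtain xs ys where xy: "x = sum_list (map2 (*) xs ys)" "length xs = length ys"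
      "set xs \<subseteq> I" "set ys \<subseteq> J"
    using x unfolding set_mult_def by blast
  have "a * sum_list (map2 (*) xs ys) = sum_list (map2 (*) (map ((*) a) xs) ys)"
    using xy(2) by (induct xs ys rule: list_induct2) (auto simp: algebra_simps)
  moreover have "set (map ((*) a) xs) \<subseteq> I" using xy(3) I a unfolding is_ideal_def by auto
  ultimately show ?thesis unfolding set_mult_def using xy by force
qed

lemma set_mult_subset_subfield:
  assumes sf: "is_subfield K" and "I \<subseteq> K" "J \<subseteq> K"
  shows "set_mult I J \<subseteq> K"
proof
  fix x assume "x \<in> set_mult I J"
  then obtain xs ys where xy: "x = sum_list (map2 (*) xs ys)" "set xs \<subseteq> I" "set ys \<subseteq> J"
    unfolding set_mult_def by blast
  have sum_list_in: "sum_list zs \<in> K" if "set zs \<subseteq> K" for zs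
    using that by (induct zs) (auto intro: subfield_add[OF sf] subfield_0[OF sf])
  have "set (map2 (*) xs ys) \<subseteq> K"
  proof
    fix z assume "z \<in> set (map2 (*) xs ys)"
    then obtain a b where ab: "(a, b) \<in> set (zip xs ys)" "z = a * b" by auto
    then have "a \<in> K" "b \<in> K"
      using set_zip_leftD[OF ab(1)] set_zip_rightD[OF ab(1)] xy(2,3) assms(2,3) by auto
    then show "z \<in> K" using ab(2) subfield_mult[OF sf] by simp
  qed
  then show "x \<in> K" using xy(1) sum_list_in by simp
qed

lemma set_mult_frac_inv_subset:
  "is_subfield K \<Longrightarrow> I \<subseteq> K \<Longrightarrow> set_mult I (frac_inv K R J) \<subseteq> K"
  using set_mult_subset_subfield[of K I "frac_inv K R J"] by (auto simp: frac_inv_def)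

section \<open>The index of a full sublattice\<close>

lemma ideal_index_eq_card_representatives:
  assumes R: "R \<subseteq> S" and I0: "0 \<in> I" and Idiff: "\<And>x y. x \<in> I \<Longrightarrow> y \<in> I \<Longrightarrow> x - y \<in> I"
    and ex: "\<And>y. y \<in> S \<Longrightarrow> \<exists>\<rho>\<in>R. y - \<rho> \<in> I"
    and un: "\<And>\<rho> \<rho>'. \<rho> \<in> R \<Longrightarrow> \<rho>' \<in> R \<Longrightarrow> \<rho> - \<rho>' \<in> I \<Longrightarrow> \<rho> = \<rho>'"
  shows "ideal_index S I = card (R :: complex set)"
proof -
  let ?f = "\<lambda>x. {y \<in> S. y - x \<in> I}"
  have Iadd: "x + y \<in> I" if "x \<in> I" "y \<in> I" for x y
    using Idiff[OF that(1) Idiff[OF I0 that(2)]] by simp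
  have coset_eq: "?f x = ?f \<rho>" if "x - \<rho> \<in> I" for x \<rho>
  proof -
    have "y - x \<in> I \<longleftrightarrow> y - \<rho> \<in> I" for y
      using Iadd[OF _ that, of "y - x"] Idiff[OF _ that, of "y - \<rho>"] by auto
    then show ?thesis by auto
  qed
  have "?f ` S = ?f ` R"
  proof
    show "?f ` S \<subseteq> ?f ` R"
    proof
      fix X assume "X \<in> ?f ` S"
      then obtain x where x: "x \<in> S" "X = ?f x" by blast
      obtain \<rho> where "\<rho> \<in> R" "x - \<rho> \<in> I" using ex[OF x(1)] by blast
      then show "X \<in> ?f ` R" using coset_eq x(2) by blast
    qed
    show "?f ` R \<subseteq> ?f ` S" using R by (rule image_mono)
  qed
  moreover have "inj_on ?f R"
  proof (rule inj_onI)
    fix \<rho> \<rho>' assume r: "\<rho> \<in> R" "\<rho>' \<in> R" and e: "?f \<rho> = ?f \<rho>'"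
    have "\<rho> \<in> ?f \<rho>" using r R I0 by auto
    then show "\<rho> = \<rho>'" using e un r by blast
  qed
  ultimately show ?thesis unfolding ideal_index_def by (simp add: card_image)
qed

definition int_coord :: "complex list \<Rightarrow> complex \<Rightarrow> nat \<Rightarrow> int" where
  "int_coord es x i = \<lfloor>coord es x i\<rfloor>"

lemma det_wrt_lower_triangular:
  assumes "\<And>k i. k < length es \<Longrightarrow> i < k \<Longrightarrow> coord es (gs ! k) i = 0"
  shows "det_wrt es gs = (\<Prod>i<length es. coord es (gs ! i) i)"
  unfolding det_wrt_def
  by (subst det_lower_triangular[of "length es"])
    (use assms in \<open>auto simp: prod_list_diag_prod atLeast0LessThan\<close>)

context
  fixes es :: "complex list"
  assumes zind: "Z_indep es"
begin

lemma of_int_int_coord: "x \<in> Z_span es \<Longrightarrow> of_int (int_coord es x i) = coord es x i"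
  using coord_Z_span[OF Z_indep_imp_Q_indep[OF zind]] unfolding int_coord_def
  by (metis floor_of_int Ints_cases)

lemma int_coord_add_mult:
  assumes "x \<in> Z_span es" "y \<in> Z_span es"
  shows "int_coord es (x + of_int a * y) i = int_coord es x i + a * int_coord es y i"
proof -
  have xy: "x \<in> Q_span es" "of_int a * y \<in> Q_span es" "y \<in> Q_span es"
    using assms Z_span_int_mult Z_span_subset_Q_span by blast+
  have "of_int (int_coord es (x + of_int a * y) i) = coord es (x + of_int a * y) i"
    using of_int_int_coord Z_span_add[OF assms(1) Z_span_int_mult[OF assms(2)]] by blast
  also have "\<dots> = of_int (int_coord es x i + a * int_coord es y i)"
    using coord_add[OF Z_indep_imp_Q_indep[OF zind] xy(1,2)] coord_int_mult[OF Z_indep_imp_Q_indep[OF zind] xy(3)]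
      of_int_int_coord assms by simp
  finally show ?thesis by (simp only: of_int_eq_iff)
qed

lemma int_coord_Z_comb: "i < length es \<Longrightarrow> int_coord es (Z_comb es x) i = x i"
  unfolding int_coord_def Z_comb_Q_comb by (simp add: coord_Q_comb[OF Z_indep_imp_Q_indep[OF zind]])

lemma Z_comb_int_coord: "y \<in> Z_span es \<Longrightarrow> Z_comb es (int_coord es y) = y"
  unfolding Z_comb_Q_comb
  using Q_comb_coord[OF Z_indep_imp_Q_indep[OF zind]] Z_span_subset_Q_span of_int_int_coord by auto

lemma int_coord_Z_comb_family:
  assumes gs: "set gs \<subseteq> Z_span es"
  shows "int_coord es (Z_comb gs z) i = (\<Sum>j<length gs. z j * int_coord es (gs ! j) i)"
proof -
  have g: "gs ! j \<in> Z_span es" if "j < length gs" for j using gs that nth_mem[of j gs] by auto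
  then have g': "gs ! j \<in> Q_span es" if "j < length gs" for j
    using that Z_span_subset_Q_span by blast
  have "of_int (int_coord es (Z_comb gs z) i) = coord es (Z_comb gs z) i"
    using of_int_int_coord Z_span_mono[OF gs] unfolding Z_span_def by blast
  also have "\<dots> = (\<Sum>j<length gs. coord es (of_int (z j) * gs ! j) i)"
    unfolding Z_comb_def using g Z_span_int_mult Z_span_subset_Q_span
    by (subst coord_sum[OF Z_indep_imp_Q_indep[OF zind]]) blast+
  also have "\<dots> = (\<Sum>j<length gs. of_int (z j) * coord es (gs ! j) i)"
    by (intro sum.cong refl) (simp add: coord_int_mult[OF Z_indep_imp_Q_indep[OF zind] g'])
  also have "\<dots> = of_int (\<Sum>j<length gs. z j * int_coord es (gs ! j) i)"
    using g by (simp add: of_int_int_coord)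
  finally show ?thesis by (simp only: of_int_eq_iff)
qed

definition coord_box :: "complex list \<Rightarrow> (nat \<Rightarrow> int) set" where
  "coord_box gs = (\<Pi>\<^sub>E i\<in>{..<length es}. {0..<\<bar>int_coord es (gs ! i) i\<bar>})"

context
  fixes gs :: "complex list"
  assumes len: "length gs = length es" and gs: "set gs \<subseteq> Z_span es"
    and tri: "\<And>k i. k < length es \<Longrightarrow> i < k \<Longrightarrow> coord es (gs ! k) i = 0"
    and diag: "\<And>i. i < length es \<Longrightarrow> coord es (gs ! i) i \<noteq> 0"
begin

lemma triangular_nth_Z_span: "j < length es \<Longrightarrow> gs ! j \<in> Z_span es"
  using gs len nth_mem by (metis subsetD)

lemma triangular_int_coord_eq_0: "k < length es \<Longrightarrow> i < k \<Longrightarrow> int_coord es (gs ! k) i = 0"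
  using tri of_int_int_coord[OF triangular_nth_Z_span] by (metis of_int_eq_0_iff)

lemma triangular_int_coord_diag: "i < length es \<Longrightarrow> int_coord es (gs ! i) i \<noteq> 0"
  using diag of_int_int_coord[OF triangular_nth_Z_span] by (metis of_int_0)

text \<open>Division with remainder, one coordinate at a time: subtracting a multiple of
  \<open>gs ! k\<close> does not change the coordinates below \<open>k\<close>.\<close>

lemma triangular_reduce_prefix:
  assumes y: "y \<in> Z_span es" and k: "k \<le> length es"
  shows "\<exists>w\<in>Z_span gs. \<forall>i<k.
    0 \<le> int_coord es (y - w) i \<and> int_coord es (y - w) i < \<bar>int_coord es (gs ! i) i\<bar>"
  using k
proof (induct k)
  case 0
  then show ?case using Z_span_0 by blast
next
  case (Suc k)
  then obtain w where w: "w \<in> Z_span gs"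
    "\<forall>i<k. 0 \<le> int_coord es (y - w) i \<and> int_coord es (y - w) i < \<bar>int_coord es (gs ! i) i\<bar>"
    by auto
  have kd: "k < length es" using Suc by simp
  have vS: "y - w \<in> Z_span es" using Z_span_diff[OF y] w(1) Z_span_mono[OF gs] by blast
  define c where "c = int_coord es (y - w) k"
  define t where "t = int_coord es (gs ! k) k"
  define m where "m = (c div \<bar>t\<bar>) * sgn t"
  have t: "t \<noteq> 0" using triangular_int_coord_diag[OF kd] unfolding t_def .
  have w'I: "w + of_int m * gs ! k \<in> Z_span gs"
    using Z_span_add[OF w(1) Z_span_int_mult[OF Z_span_nth]] kd len by simp
  have icn: "int_coord es (y - (w + of_int m * gs ! k)) i = int_coord es (y - w) i - m * int_coord es (gs ! k) i" for i
    using int_coord_add_mult[OF vS triangular_nth_Z_span[OF kd], of "- m" i] by (simp add: algebra_simps)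
  have "m * t = (c div \<bar>t\<bar>) * \<bar>t\<bar>" unfolding m_def using t by (simp add: abs_sgn mult.assoc)
  then have "c - m * t = c mod \<bar>t\<bar>" by (simp add: minus_div_mult_eq_mod)
  then have "0 \<le> c - m * t" "c - m * t < \<bar>t\<bar>" using t by simp_all
  then show ?case
    using w(2) icn triangular_int_coord_eq_0[OF kd] unfolding c_def t_def
    by (intro bexI[OF _ w'I]) (auto simp: less_Suc_eq)
qed

lemma triangular_reduce:
  assumes y: "y \<in> Z_span es"
  shows "\<exists>x\<in>coord_box gs. y - Z_comb es x \<in> Z_span gs"
proof -
  obtain w where w: "w \<in> Z_span gs" "\<forall>i<length es.
      0 \<le> int_coord es (y - w) i \<and> int_coord es (y - w) i < \<bar>int_coord es (gs ! i) i\<bar>"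
    using triangular_reduce_prefix[OF y order.refl] by blast
  define x where "x = restrict (int_coord es (y - w)) {..<length es}"
  have "x \<in> coord_box gs" unfolding coord_box_def x_def using w(2) by auto
  moreover have "Z_comb es x = y - w"
    using Z_comb_int_coord Z_span_diff[OF y] w(1) Z_span_mono[OF gs]
    unfolding Z_comb_def x_def by auto
  ultimately show ?thesis using w(1) by force
qed

lemma triangular_box_unique:
  assumes x: "x \<in> coord_box gs" "x' \<in> coord_box gs"
    and dI: "Z_comb es x - Z_comb es x' \<in> Z_span gs"
  shows "x = x'"
proof -
  obtain z where z: "Z_comb es x - Z_comb es x' = Z_comb gs z" using dI unfolding Z_span_def by auto
  have diff: "x i - x' i = (\<Sum>j<length es. z j * int_coord es (gs ! j) i)" if i: "i < length es" for i
  proof -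
    have "x i - x' i = int_coord es (Z_comb es x + of_int (- 1) * Z_comb es x') i"
      using int_coord_add_mult[of "Z_comb es x" "Z_comb es x'" "- 1" i] int_coord_Z_comb[OF i]
      unfolding Z_span_def by simp
    then show ?thesis using int_coord_Z_comb_family[OF gs] z len by simp
  qed
  have bounds: "\<bar>x i - x' i\<bar> < \<bar>int_coord es (gs ! i) i\<bar>" if "i < length es" for i
  proof -
    have "0 \<le> x i" "x i < \<bar>int_coord es (gs ! i) i\<bar>" "0 \<le> x' i" "x' i < \<bar>int_coord es (gs ! i) i\<bar>"
      using x that unfolding coord_box_def by (auto simp: PiE_iff)
    then show ?thesis by linarith
  qed
  have z0: "z i = 0" if "i < length es" for i
    using that
  proof (induct i rule: less_induct)
    case (less i)
    have "(\<Sum>j<length es. z j * int_coord es (gs ! j) i)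
        = (\<Sum>j<length es. if j = i then z i * int_coord es (gs ! i) i else 0)"
      using less triangular_int_coord_eq_0 by (intro sum.cong refl) (auto simp: neq_iff)
    also have "\<dots> = z i * int_coord es (gs ! i) i" using less.prems by simp
    finally have "(\<Sum>j<length es. z j * int_coord es (gs ! j) i) = z i * int_coord es (gs ! i) i" .
    then have "\<bar>z i\<bar> * \<bar>int_coord es (gs ! i) i\<bar> < 1 * \<bar>int_coord es (gs ! i) i\<bar>"
      using bounds[OF less.prems] diff[OF less.prems] by (simp add: abs_mult)
    then have "\<bar>z i\<bar> < 1" by (rule mult_right_less_imp_less) simp
    then show ?case by simp
  qed
  have "x i = x' i" if "i < length es" for i
    using diff[OF that] z0 by simp
  then show ?thesis using x unfolding coord_box_def by (intro PiE_ext) auto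
qed

lemma triangular_ideal_index:
  "of_nat (ideal_index (Z_span es) (Z_span gs)) = \<bar>det_wrt es gs\<bar>"
proof -
  let ?R = "Z_comb es ` coord_box gs"
  have "ideal_index (Z_span es) (Z_span gs) = card ?R"
  proof (rule ideal_index_eq_card_representatives)
    show "?R \<subseteq> Z_span es" unfolding Z_span_def by blast
    show "\<rho> = \<rho>'" if "\<rho> \<in> ?R" "\<rho>' \<in> ?R" "\<rho> - \<rho>' \<in> Z_span gs" for \<rho> \<rho>'
      using that triangular_box_unique by blast
  qed (use Z_span_0 Z_span_diff triangular_reduce in blast)+
  also have "\<dots> = card (coord_box gs)"
    using triangular_box_unique Z_span_0 by (intro card_image inj_onI) simp
  also have "\<dots> = (\<Prod>i<length es. nat \<bar>int_coord es (gs ! i) i\<bar>)"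
    unfolding coord_box_def by (simp add: card_PiE)
  finally have "of_nat (ideal_index (Z_span es) (Z_span gs)) = (\<Prod>i<length es. \<bar>coord es (gs ! i) i\<bar>)"
    by (simp add: of_int_int_coord[OF triangular_nth_Z_span, symmetric] of_nat_prod)
  then show ?thesis using det_wrt_lower_triangular[of es gs] tri by (simp add: abs_prod)
qed

end

end

definition addcol_list :: "int \<Rightarrow> nat \<Rightarrow> nat \<Rightarrow> complex list \<Rightarrow> complex list" where
  "addcol_list a k l gs = gs[k := gs ! k + of_int a * gs ! l]"

definition swapcols_list :: "nat \<Rightarrow> nat \<Rightarrow> complex list \<Rightarrow> complex list" where
  "swapcols_list k l gs = gs[k := gs ! l, l := gs ! k]"

lemma length_addcol_list [simp]: "length (addcol_list a k l gs) = length gs"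
  unfolding addcol_list_def by simp

lemma length_swapcols_list [simp]: "length (swapcols_list k l gs) = length gs"
  unfolding swapcols_list_def by simp

lemma nth_addcol_list: "j < length gs \<Longrightarrow>
  addcol_list a k l gs ! j = (if j = k then gs ! k + of_int a * gs ! l else gs ! j)"
  unfolding addcol_list_def by simp

lemma nth_swapcols_list: "k < length gs \<Longrightarrow> l < length gs \<Longrightarrow> j < length gs \<Longrightarrow>
  swapcols_list k l gs ! j = (if j = k then gs ! l else if j = l then gs ! k else gs ! j)"
  unfolding swapcols_list_def by (auto simp: nth_list_update)

lemma Z_span_addcol_list_subset:
  assumes "k < length gs" "l < length gs"
  shows "Z_span (addcol_list a k l gs) \<subseteq> Z_span gs"
proof (rule Z_span_mono, rule subsetI)
  fix x assume "x \<in> set (addcol_list a k l gs)"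
  then obtain j where j: "j < length gs" "x = addcol_list a k l gs ! j"
    by (auto simp: in_set_conv_nth)
  then show "x \<in> Z_span gs"
    using assms by (simp add: nth_addcol_list Z_span_add Z_span_int_mult Z_span_nth)
qed

lemma Z_span_addcol_list:
  assumes "k < length gs" "l < length gs" "k \<noteq> l"
  shows "Z_span (addcol_list a k l gs) = Z_span gs"
proof -
  have "addcol_list (- a) k l (addcol_list a k l gs) = gs"
    using assms by (intro nth_equalityI) (auto simp: nth_addcol_list)
  then show ?thesis
    using Z_span_addcol_list_subset[of k "addcol_list a k l gs" l "- a"]
      Z_span_addcol_list_subset[of k gs l a] assms by auto
qed

lemma Z_span_swapcols_list:
  assumes "k < length gs" "l < length gs"
  shows "Z_span (swapcols_list k l gs) = Z_span gs"
proof -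
  have sub: "Z_span (swapcols_list k l hs) \<subseteq> Z_span hs" if hs: "length hs = length gs" for hs
  proof (rule Z_span_mono, rule subsetI)
    fix x assume "x \<in> set (swapcols_list k l hs)"
    then obtain j where j: "j < length hs" "x = swapcols_list k l hs ! j"
      by (auto simp: in_set_conv_nth)
    then show "x \<in> Z_span hs" using assms hs by (simp add: nth_swapcols_list Z_span_nth)
  qed
  have "swapcols_list k l (swapcols_list k l gs) = gs"
    using assms by (intro nth_equalityI) (auto simp: nth_swapcols_list)
  then show ?thesis using sub[of gs] sub[of "swapcols_list k l gs"] by auto
qed

lemma det_wrt_addcol_list:
  assumes qi: "Q_indep es" and len: "length gs = length es" and gs: "set gs \<subseteq> Q_span es"
    and kl: "k < length es" "l < length es" "k \<noteq> l"
  shows "det_wrt es (addcol_list a k l gs) = det_wrt es gs"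
proof -
  let ?n = "length es"
  have gsn: "gs ! j \<in> Q_span es" if "j < ?n" for j using gs len that nth_mem[of j gs] by auto
  have al: "of_int a * gs ! l \<in> Q_span es" using Q_span_scale[OF gsn[OF kl(2)], of "of_int a"] by simp
  have col: "coord es (addcol_list a k l gs ! j) i
      = (if k = j then of_int a * coord es (gs ! l) i + coord es (gs ! j) i else coord es (gs ! j) i)"
    if "j < ?n" for i j
    using that len coord_add[OF qi gsn[OF kl(1)] al, of i] coord_int_mult[OF qi gsn[OF kl(2)], of a i]
    by (auto simp: nth_addcol_list)
  have "mat ?n ?n (\<lambda>(i, j). coord es (addcol_list a k l gs ! j) i)
      = addcol (of_int a) k l (mat ?n ?n (\<lambda>(i, j). coord es (gs ! j) i))"
    unfolding mat_addcol_def using kl by (intro eq_matI) (auto simp: col)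
  then show ?thesis unfolding det_wrt_def using det_addcol[OF kl(2,3) mat_carrier] by simp
qed

lemma det_wrt_swapcols_list:
  assumes len: "length gs = length es" and kl: "k < length es" "l < length es" "k \<noteq> l"
  shows "det_wrt es (swapcols_list k l gs) = - det_wrt es gs"
proof -
  have "mat (length es) (length es) (\<lambda>(i, j). coord es (swapcols_list k l gs ! j) i)
      = swapcols k l (mat (length es) (length es) (\<lambda>(i, j). coord es (gs ! j) i))"
    using kl len by (intro eq_matI) (auto simp: nth_swapcols_list mat_swapcols_def)
  then show ?thesis unfolding det_wrt_def using det_swapcols[OF kl mat_carrier] by simp
qed

definition lattice_equiv :: "complex list \<Rightarrow> complex list \<Rightarrow> complex list \<Rightarrow> bool" where
  "lattice_equiv es gs gs' \<longleftrightarrow> length gs' = length gs \<and> Z_span gs' = Z_span gs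
     \<and> \<bar>det_wrt es gs'\<bar> = \<bar>det_wrt es gs\<bar>"

lemma lattice_equiv_trans:
  "lattice_equiv es gs gs' \<Longrightarrow> lattice_equiv es gs' gs'' \<Longrightarrow> lattice_equiv es gs gs''"
  unfolding lattice_equiv_def by simp

lemma lattice_equiv_subset:
  "lattice_equiv es gs gs' \<Longrightarrow> set gs \<subseteq> Z_span es \<Longrightarrow> set gs' \<subseteq> Z_span es"
proof -
  assume "lattice_equiv es gs gs'" "set gs \<subseteq> Z_span es"
  then have "Z_span gs' \<subseteq> Z_span es" unfolding lattice_equiv_def using Z_span_mono by auto
  then show ?thesis using set_subset_Z_span[of gs'] by (rule order.trans[rotated])
qed

lemma lattice_equiv_addcol_list:
  assumes "Q_indep es" "length gs = length es" "set gs \<subseteq> Q_span es"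
    "k < length es" "l < length es" "k \<noteq> l"
  shows "lattice_equiv es gs (addcol_list a k l gs)"
  unfolding lattice_equiv_def using assms Z_span_addcol_list det_wrt_addcol_list by simp

lemma lattice_equiv_swapcols_list:
  assumes "length gs = length es" "k < length es" "l < length es" "k \<noteq> l"
  shows "lattice_equiv es gs (swapcols_list k l gs)"
  unfolding lattice_equiv_def using assms Z_span_swapcols_list det_wrt_swapcols_list by simp

text \<open>Euclid's algorithm on the entries \<open>c k, \<dots>, c (n - 1)\<close> of a column terminates
  since every step decreases the following measure.\<close>

definition pivot_measure :: "nat \<Rightarrow> nat \<Rightarrow> (nat \<Rightarrow> int) \<Rightarrow> int" where
  "pivot_measure n k c = 2 * (\<Sum>m\<in>{k<..<n}. \<bar>c m\<bar>) + \<bar>c k\<bar> + (if c k = 0 then 1 else 0)"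

lemma pivot_measure_nonneg: "0 \<le> pivot_measure n k c"
  unfolding pivot_measure_def by (auto intro!: sum_nonneg)

lemma pivot_measure_cong:
  assumes "k < n" "\<And>m. m < n \<Longrightarrow> c m = c' m"
  shows "pivot_measure n k c = pivot_measure n k c'"
proof -
  have "(\<Sum>m\<in>{k<..<n}. \<bar>c m\<bar>) = (\<Sum>m\<in>{k<..<n}. \<bar>c' m\<bar>)" "c k = c' k"
    using assms by (auto intro!: sum.cong)
  then show ?thesis unfolding pivot_measure_def by simp
qed

lemma sum_fun_upd_abs:
  assumes "finite A" "j \<in> A"
  shows "(\<Sum>m\<in>A. \<bar>(c(j := x)) m\<bar>) = (\<Sum>m\<in>A. \<bar>c m\<bar>) - \<bar>c j\<bar> + \<bar>x :: int\<bar>"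
proof -
  have "(\<Sum>m\<in>A - {j}. \<bar>(c(j := x)) m\<bar>) = (\<Sum>m\<in>A - {j}. \<bar>c m\<bar>)" by (intro sum.cong) auto
  then show ?thesis
    using sum.remove[OF assms, of "\<lambda>m. \<bar>(c(j := x)) m\<bar>"] sum.remove[OF assms, of "\<lambda>m. \<bar>c m\<bar>"]
    by simp
qed

lemma pivot_measure_swap:
  assumes "k < j" "j < n" "c k = 0" "c j \<noteq> 0"
  shows "pivot_measure n k (c(k := c j, j := c k)) < pivot_measure n k c"
proof -
  have "(\<Sum>m\<in>{k<..<n}. \<bar>(c(k := c j, j := c k)) m\<bar>) = (\<Sum>m\<in>{k<..<n}. \<bar>(c(j := c k)) m\<bar>)"
    using assms(1) by (intro sum.cong) auto
  then show ?thesis using assms sum_fun_upd_abs[of "{k<..<n}" j c "c k"]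
    unfolding pivot_measure_def by simp
qed

lemma pivot_measure_reduce_entry:
  assumes "k < j" "j < n" "c k \<noteq> 0" "\<bar>c k\<bar> \<le> \<bar>c j\<bar>"
  shows "pivot_measure n k (c(j := c j - sgn (c j) * sgn (c k) * c k)) < pivot_measure n k c"
proof -
  have "\<bar>c j - sgn (c j) * sgn (c k) * c k\<bar> = \<bar>c j\<bar> - \<bar>c k\<bar>"
    using assms(3,4) by (cases "c j > 0"; cases "c k > 0") (auto simp: sgn_if)
  then show ?thesis using assms sum_fun_upd_abs[of "{k<..<n}" j c]
    unfolding pivot_measure_def by simp
qed

lemma pivot_measure_reduce_pivot:
  assumes "k < j" "j < n" "c j \<noteq> 0" "\<bar>c j\<bar> < \<bar>c k\<bar>"
  shows "pivot_measure n k (c(k := c k - sgn (c k) * sgn (c j) * c j)) < pivot_measure n k c"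
proof -
  have "\<bar>c k - sgn (c k) * sgn (c j) * c j\<bar> = \<bar>c k\<bar> - \<bar>c j\<bar>"
    using assms(3,4) by (cases "c j > 0"; cases "c k > 0") (auto simp: sgn_if)
  moreover have "(\<Sum>m\<in>{k<..<n}. \<bar>(c(k := x)) m\<bar>) = (\<Sum>m\<in>{k<..<n}. \<bar>c m\<bar>)" for x
    by (intro sum.cong) auto
  ultimately show ?thesis using assms unfolding pivot_measure_def by auto
qed

definition triangular_upto :: "complex list \<Rightarrow> nat \<Rightarrow> complex list \<Rightarrow> bool" where
  "triangular_upto es k gs \<longleftrightarrow> (\<forall>i<k. \<forall>j<length es. i < j \<longrightarrow> int_coord es (gs ! j) i = 0)"

context
  fixes es :: "complex list"
  assumes zind: "Z_indep es"
begin

lemma int_coord_addcol_list: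
  assumes "length gs = length es" "set gs \<subseteq> Z_span es" "p < length es" "q < length es" "m < length es"
  shows "int_coord es (addcol_list a p q gs ! m) i
    = (if m = p then int_coord es (gs ! p) i + a * int_coord es (gs ! q) i else int_coord es (gs ! m) i)"
proof -
  have "gs ! m' \<in> Z_span es" if "m' < length es" for m' using assms(1,2) that nth_mem[of m' gs] by auto
  then show ?thesis using assms int_coord_add_mult[OF zind] by (simp add: nth_addcol_list)
qed

lemma triangular_upto_addcol_list:
  assumes "length gs = length es" "set gs \<subseteq> Z_span es" "triangular_upto es k gs"
    "k \<le> p" "p < length es" "k \<le> q" "q < length es"
  shows "triangular_upto es k (addcol_list a p q gs)"
  using assms unfolding triangular_upto_def by (auto simp: int_coord_addcol_list)

lemma triangular_upto_swapcols_list: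
  assumes "length gs = length es" "triangular_upto es k gs" "k \<le> p" "p < length es" "k \<le> q" "q < length es"
  shows "triangular_upto es k (swapcols_list p q gs)"
  using assms unfolding triangular_upto_def by (auto simp: nth_swapcols_list)

definition reduces_pivot :: "nat \<Rightarrow> complex list \<Rightarrow> complex list \<Rightarrow> bool" where
  "reduces_pivot k gs gs' \<longleftrightarrow> lattice_equiv es gs gs' \<and> triangular_upto es k gs'
     \<and> pivot_measure (length es) k (\<lambda>m. int_coord es (gs' ! m) k)
       < pivot_measure (length es) k (\<lambda>m. int_coord es (gs ! m) k)"

lemma pivot_reduction_step:
  assumes len: "length gs = length es" and gs: "set gs \<subseteq> Z_span es"
    and tri: "triangular_upto es k gs"
    and j: "k < j" "j < length es" "int_coord es (gs ! j) k \<noteq> 0"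
  shows "\<exists>gs'. reduces_pivot k gs gs'"
proof -
  let ?n = "length es"
  define c where "c m = int_coord es (gs ! m) k" for m
  have k: "k < ?n" and jk: "j \<noteq> k" using j by auto
  have gsQ: "set gs \<subseteq> Q_span es" using gs Z_span_subset_Q_span by blast
  note equiv_addcol = lattice_equiv_addcol_list[OF Z_indep_imp_Q_indep[OF zind] len gsQ]
  consider (swap) "c k = 0" | (entry) "c k \<noteq> 0" "\<bar>c k\<bar> \<le> \<bar>c j\<bar>" | (pivot) "\<bar>c j\<bar> < \<bar>c k\<bar>"
    by linarith
  then show ?thesis
  proof cases
    case swap
    let ?gs' = "swapcols_list k j gs"
    have "pivot_measure ?n k (\<lambda>m. int_coord es (?gs' ! m) k) = pivot_measure ?n k (c(k := c j, j := c k))"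
      using k j len by (intro pivot_measure_cong) (auto simp: nth_swapcols_list c_def)
    then have "reduces_pivot k gs ?gs'"
      using lattice_equiv_swapcols_list[OF len k j(2) jk[symmetric]] j(3) k
        triangular_upto_swapcols_list[OF len tri order.refl k less_imp_le[OF j(1)] j(2)]
        pivot_measure_swap[of k j ?n c, OF j(1,2) swap]
      unfolding reduces_pivot_def c_def by simp
    then show ?thesis by blast
  next
    case entry
    let ?gs' = "addcol_list (- (sgn (c j) * sgn (c k))) j k gs"
    have "pivot_measure ?n k (\<lambda>m. int_coord es (?gs' ! m) k)
        = pivot_measure ?n k (c(j := c j - sgn (c j) * sgn (c k) * c k))"
      using k j len gs by (intro pivot_measure_cong) (auto simp: int_coord_addcol_list c_def)
    then have "reduces_pivot k gs ?gs'"
      using equiv_addcol[OF j(2) k jk] pivot_measure_reduce_entry[of k j ?n c, OF j(1,2) entry]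
        triangular_upto_addcol_list[OF len gs tri less_imp_le[OF j(1)] j(2) order.refl k]
      unfolding reduces_pivot_def c_def by simp
    then show ?thesis by blast
  next
    case pivot
    let ?gs' = "addcol_list (- (sgn (c k) * sgn (c j))) k j gs"
    have "pivot_measure ?n k (\<lambda>m. int_coord es (?gs' ! m) k)
        = pivot_measure ?n k (c(k := c k - sgn (c k) * sgn (c j) * c j))"
      using k j len gs by (intro pivot_measure_cong) (auto simp: int_coord_addcol_list c_def)
    then have "reduces_pivot k gs ?gs'"
      using equiv_addcol[OF k j(2) jk[symmetric]] pivot_measure_reduce_pivot[of k j ?n c, OF j(1,2) _ pivot] j(3)
        triangular_upto_addcol_list[OF len gs tri order.refl k less_imp_le[OF j(1)] j(2)]
      unfolding reduces_pivot_def c_def by simp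
    then show ?thesis by blast
  qed
qed

lemma triangular_upto_Suc:
  assumes "length gs = length es" "set gs \<subseteq> Z_span es" "triangular_upto es k gs" "k < length es"
  shows "\<exists>gs'. lattice_equiv es gs gs' \<and> triangular_upto es (Suc k) gs'"
  using assms
proof (induct "nat (pivot_measure (length es) k (\<lambda>m. int_coord es (gs ! m) k))"
    arbitrary: gs rule: less_induct)
  case less
  show ?case
  proof (cases "\<exists>j. k < j \<and> j < length es \<and> int_coord es (gs ! j) k \<noteq> 0")
    case True
    then obtain j where "k < j" "j < length es" "int_coord es (gs ! j) k \<noteq> 0" by blast
    then obtain gs1 where gs1: "lattice_equiv es gs gs1" "triangular_upto es k gs1"
      "pivot_measure (length es) k (\<lambda>m. int_coord es (gs1 ! m) k)
        < pivot_measure (length es) k (\<lambda>m. int_coord es (gs ! m) k)"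
      using pivot_reduction_step less.prems unfolding reduces_pivot_def by blast
    moreover have "length gs1 = length es" "set gs1 \<subseteq> Z_span es"
      using lattice_equiv_subset[OF gs1(1) less.prems(2)] gs1(1) less.prems(1)
      unfolding lattice_equiv_def by auto
    moreover have "nat (pivot_measure (length es) k (\<lambda>m. int_coord es (gs1 ! m) k))
        < nat (pivot_measure (length es) k (\<lambda>m. int_coord es (gs ! m) k))"
      using gs1(3) pivot_measure_nonneg[of "length es" k "\<lambda>m. int_coord es (gs1 ! m) k"] by linarith
    ultimately obtain gs' where "lattice_equiv es gs1 gs'" "triangular_upto es (Suc k) gs'"
      using less.hyps less.prems(4) by blast
    then show ?thesis using lattice_equiv_trans[OF gs1(1)] by blast
  next
    case False
    then have "triangular_upto es (Suc k) gs"
      using less.prems(3) unfolding triangular_upto_def by (auto simp: less_Suc_eq)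
    then show ?thesis unfolding lattice_equiv_def by blast
  qed
qed

lemma triangular_upto_exists:
  assumes "length gs = length es" "set gs \<subseteq> Z_span es" "k \<le> length es"
  shows "\<exists>gs'. lattice_equiv es gs gs' \<and> triangular_upto es k gs'"
  using assms(3)
proof (induct k)
  case 0
  then show ?case unfolding lattice_equiv_def triangular_upto_def by blast
next
  case (Suc k)
  then obtain gs1 where "lattice_equiv es gs gs1" "triangular_upto es k gs1" by auto
  moreover have "length gs1 = length es" "set gs1 \<subseteq> Z_span es"
    using lattice_equiv_subset[OF calculation(1) assms(2)] calculation(1) assms(1)
    unfolding lattice_equiv_def by auto
  ultimately obtain gs' where "lattice_equiv es gs1 gs'" "triangular_upto es (Suc k) gs'"
    using triangular_upto_Suc[of gs1 k] Suc.prems by auto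
  then show ?case using lattice_equiv_trans[OF \<open>lattice_equiv es gs gs1\<close>] by blast
qed

theorem ideal_index_eq_abs_det_wrt:
  assumes len: "length gs = length es" and gs: "set gs \<subseteq> Z_span es" and nz: "det_wrt es gs \<noteq> 0"
  shows "of_nat (ideal_index (Z_span es) (Z_span gs)) = \<bar>det_wrt es gs\<bar>"
proof -
  obtain gs' where eq: "lattice_equiv es gs gs'" and tri: "triangular_upto es (length es) gs'"
    using triangular_upto_exists[OF len gs order.refl] by blast
  have len': "length gs' = length es" and gs': "set gs' \<subseteq> Z_span es"
    using eq lattice_equiv_subset[OF eq gs] len unfolding lattice_equiv_def by auto
  have gsn: "gs' ! j \<in> Z_span es" if "j < length es" for j using gs' len' that nth_mem[of j gs'] by auto
  have lower: "coord es (gs' ! k) i = 0" if "k < length es" "i < k" for k i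
    using tri that of_int_int_coord[OF zind gsn[OF that(1)], of i]
    unfolding triangular_upto_def by auto
  have "det_wrt es gs' \<noteq> 0" using eq nz unfolding lattice_equiv_def by auto
  then have "(\<Prod>i<length es. coord es (gs' ! i) i) \<noteq> 0"
    using det_wrt_lower_triangular[of es gs', OF lower] by simp
  then have "coord es (gs' ! i) i \<noteq> 0" if "i < length es" for i using that by auto
  then show ?thesis using triangular_ideal_index[OF zind len' gs' lower] eq
    unfolding lattice_equiv_def by simp
qed

end

section \<open>Triangular bases, embedding determinants and norms\<close>

lemma det_wrt_upper_triangular:
  assumes "\<And>k i. k < i \<Longrightarrow> i < length es \<Longrightarrow> coord es (vs ! k) i = 0"
  shows "det_wrt es vs = (\<Prod>i<length es. coord es (vs ! i) i)"
  unfolding det_wrt_def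
  by (subst det_upper_triangular[of _ "length es"])
    (use assms in \<open>auto simp: upper_triangular_def prod_list_diag_prod atLeast0LessThan\<close>)

lemma lam_wrt_pos: "triangular_wrt es u r g \<Longrightarrow> lam_wrt es u r g > 0"
  unfolding lam_wrt_def triangular_wrt_def by (intro prod_pos) auto

lemma triangular_wrt_last_coord_eq_0:
  assumes qi: "Q_indep es" and len: "length es = r + 2" and tri: "triangular_wrt es u r g"
    and u0: "u 0 = 1" and j: "j \<le> r"
  shows "coord es (u j * es ! 0) (r + 1) = 0"
proof (cases "j = 0")
  case True
  then show ?thesis using coord_basis[OF qi, of 0 "r + 1"] len u0 by simp
next
  case False
  then show ?thesis using tri j unfolding triangular_wrt_def by auto
qed

lemma det_wrt_triangular:
  assumes qi: "Q_indep es" and len: "length es = r + 2" and tri: "triangular_wrt es u r g"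
    and u0: "u 0 = 1"
  shows "det_wrt es (map (\<lambda>j. u j * g) [0..<r+1] @ [x]) = lam_wrt es u r g * coord es x (r + 1)"
proof -
  let ?vs = "map (\<lambda>j. u j * g) [0..<r+1] @ [x]"
  have vs: "?vs ! k = (if k \<le> r then u k * g else x)" if "k < r + 2" for k
    using that by (auto simp: nth_append)
  have g: "coord es g i = (if i = 0 then 1 else 0)" for i
    using coord_basis[OF qi, of 0 i] len tri unfolding triangular_wrt_def by simp
  have upper: "coord es (?vs ! k) i = 0" if "k < i" "i < length es" for k i
  proof -
    have "k \<le> r" using that len by simp
    then have "?vs ! k = u k * g" using vs[of k] by (simp del: upt_Suc)
    then show ?thesis using that tri u0 g unfolding triangular_wrt_def len by (cases "k = 0") auto
  qed
  have split: "{..<length es} = insert 0 (insert (r + 1) {1..r})" unfolding len by auto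
  have "(\<Prod>i\<in>{1..r}. coord es (?vs ! i) i) = (\<Prod>i\<in>{1..r}. coord es (u i * g) i)"
  proof (rule prod.cong[OF refl])
    fix i assume "i \<in> {1..r}"
    then show "coord es (?vs ! i) i = coord es (u i * g) i" using vs[of i] by (simp del: upt_Suc)
  qed
  then have "(\<Prod>i<length es. coord es (?vs ! i) i)
      = coord es x (r + 1) * (\<Prod>i\<in>{1..r}. coord es (u i * g) i)"
    unfolding split using vs[of 0] vs[of "r + 1"] u0 g by simp
  then show ?thesis
    using det_wrt_upper_triangular[OF upper] unfolding lam_wrt_def by (simp only: mult.commute)
qed

lemma lin_form_eq_coord:
  assumes "Q_indep es" "length es = r + 2" "triangular_wrt es u r g" "u 0 = 1"
  shows "lin_form es u r g (lam_wrt es u r g) = (\<lambda>x. coord es x (r + 1))"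
  using det_wrt_triangular[OF assms] lam_wrt_pos[OF assms(3)] unfolding lin_form_def by auto

lemma det_wrt_mult_change:
  assumes qA: "Q_indep eA" and qB: "Q_indep eB" and len: "length eA = length eB" "length vs = length eB"
    and vs: "set vs \<subseteq> Q_span eB" and img: "\<And>l. l < length eB \<Longrightarrow> h * eB ! l \<in> Q_span eA"
  shows "det_wrt eA (map ((*) h) vs) = det_wrt eA (map ((*) h) eB) * det_wrt eB vs"
proof -
  let ?n = "length eB"
  let ?M = "mat ?n ?n (\<lambda>(i, l). coord eA (map ((*) h) eB ! l) i)"
  let ?C = "mat ?n ?n (\<lambda>(i, k). coord eB (vs ! k) i)"
  have "mat ?n ?n (\<lambda>(i, k). coord eA (map ((*) h) vs ! k) i) = ?M * ?C"
  proof (rule eq_matI)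
    fix i k assume "i < dim_row (?M * ?C)" "k < dim_col (?M * ?C)"
    then have ik: "i < ?n" "k < ?n" by auto
    have "vs ! k \<in> Q_span eB" using vs ik len nth_mem[of k vs] by auto
    then show "mat ?n ?n (\<lambda>(i, k). coord eA (map ((*) h) vs ! k) i) $$ (i, k) = (?M * ?C) $$ (i, k)"
      using coord_mult_expand[OF qA qB _ img, of "vs ! k" i] ik len
      by (simp add: scalar_prod_def atLeast0LessThan)
  qed auto
  then show ?thesis unfolding det_wrt_def using len det_mult[of ?M ?n ?C] by simp
qed

lemma triangular_coord_mult:
  assumes qL: "Q_indep eL" and qK: "Q_indep eK"
    and len: "length eL = r + 2" "length eK = r + 2"
    and triL: "triangular_wrt eL u r g" and triK: "triangular_wrt eK u r 1" and u0: "u 0 = 1"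
    and u: "\<And>j. j \<le> r \<Longrightarrow> u j \<in> Q_span eK" and v: "v \<in> Q_span eK"
    and img: "\<And>l. l < r + 2 \<Longrightarrow> g * eK ! l \<in> Q_span eL"
  shows "lam_wrt eL u r g * coord eL (g * v) (r + 1)
    = det_wrt eL (map ((*) g) eK) * (lam_wrt eK u r 1 * coord eK v (r + 1))"
proof -
  let ?vs = "map (\<lambda>j. u j * 1) [0..<r+1] @ [v]"
  have map_vs: "map ((*) g) ?vs = map (\<lambda>j. u j * g) [0..<r+1] @ [g * v]"
    by (simp del: upt_Suc add: mult.commute)
  have "lam_wrt eL u r g * coord eL (g * v) (r + 1) = det_wrt eL (map ((*) g) ?vs)"
    unfolding map_vs det_wrt_triangular[OF qL len(1) triL u0] ..
  also have "\<dots> = det_wrt eL (map ((*) g) eK) * det_wrt eK ?vs"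
    using u v len img by (intro det_wrt_mult_change[OF qL qK]) (auto simp del: upt_Suc)
  finally show ?thesis unfolding det_wrt_triangular[OF qK len(2) triK u0] .
qed

definition embedding_det :: "(nat \<Rightarrow> complex \<Rightarrow> complex) \<Rightarrow> complex list \<Rightarrow> complex" where
  "embedding_det \<sigma> es = det (mat (length es) (length es) (\<lambda>(j, k). \<sigma> j (es ! k)))"

lemma positive_basis_iff:
  "positive_basis \<sigma> d es \<longleftrightarrow> length es = d
     \<and> \<i> * embedding_det \<sigma> es \<in> \<real> \<and> Re (\<i> * embedding_det \<sigma> es) > 0"
  unfolding positive_basis_def embedding_det_def Let_def by auto

lemma positive_basis_embedding_det:
  assumes "positive_basis \<sigma> d es"
  obtains x where "\<i> * embedding_det \<sigma> es = complex_of_real x" "x > 0"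
proof
  show "\<i> * embedding_det \<sigma> es = complex_of_real (Re (\<i> * embedding_det \<sigma> es))"
    "Re (\<i> * embedding_det \<sigma> es) > 0"
    using of_real_Re[of "\<i> * embedding_det \<sigma> es"] assms unfolding positive_basis_iff
    by (simp_all only: simp_thms)
qed

lemma embedding_det_change:
  assumes sf: "is_subfield K" and embs: "\<And>j. j < length eA \<Longrightarrow> is_embedding K (\<sigma> j)"
    and qA: "Q_indep eA" and subA: "set eA \<subseteq> K"
    and len: "length ys = length eA" and ys: "set ys \<subseteq> Q_span eA"
  shows "embedding_det \<sigma> ys = embedding_det \<sigma> eA * of_rat (det_wrt eA ys)"
proof -
  let ?n = "length eA"
  let ?S = "mat ?n ?n (\<lambda>(j, i). \<sigma> j (eA ! i))"
  let ?C = "mat ?n ?n (\<lambda>(i, k). coord eA (ys ! k) i)"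
  have "mat ?n ?n (\<lambda>(j, k). \<sigma> j (ys ! k)) = ?S * map_mat of_rat ?C"
  proof (rule eq_matI)
    fix j k assume "j < dim_row (?S * map_mat of_rat ?C)" "k < dim_col (?S * map_mat of_rat ?C)"
    then have jk: "j < ?n" "k < ?n" by auto
    have "ys ! k \<in> Q_span eA" using ys len jk nth_mem[of k ys] by auto
    then have "\<sigma> j (ys ! k) = (\<Sum>i<?n. of_rat (coord eA (ys ! k) i) * \<sigma> j (eA ! i))"
      using Q_comb_coord[OF qA] embedding_Q_comb[OF sf embs[OF jk(1)] subA] by metis
    then show "mat ?n ?n (\<lambda>(j, k). \<sigma> j (ys ! k)) $$ (j, k) = (?S * map_mat of_rat ?C) $$ (j, k)"
      using jk by (simp add: scalar_prod_def atLeast0LessThan mult.commute)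
  qed auto
  then show ?thesis
    unfolding embedding_det_def det_wrt_def using len det_mult[of ?S ?n "map_mat of_rat ?C"]
    by (simp add: of_rat_hom.hom_det)
qed

lemma embedding_det_mult:
  assumes sf: "is_subfield K" and embs: "\<And>j. j < length es \<Longrightarrow> is_embedding K (\<sigma> j)"
    and sub: "set es \<subseteq> K" and g: "g \<in> K"
  shows "embedding_det \<sigma> (map ((*) g) es) = elt_norm \<sigma> (length es) g * embedding_det \<sigma> es"
proof -
  let ?n = "length es"
  let ?S = "mat ?n ?n (\<lambda>(j, k). \<sigma> j (es ! k))"
  have "\<sigma> j (g * es ! k) = \<sigma> j g * \<sigma> j (es ! k)" if "j < ?n" "k < ?n" for j k
    using embedding_mult[OF sf embs[OF that(1)] g] sub nth_mem[OF that(2)] by blast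
  then have "mat ?n ?n (\<lambda>(j, k). \<sigma> j (map ((*) g) es ! k)) = mat_diag ?n (\<lambda>j. \<sigma> j g) * ?S"
    by (subst mat_diag_mult_left[of _ _ ?n]) (auto intro!: eq_matI)
  moreover have "det (mat_diag ?n (\<lambda>j. \<sigma> j g)) = elt_norm \<sigma> ?n g"
    unfolding elt_norm_def mat_diag_def
    by (subst det_lower_triangular[of ?n]) (auto simp: prod_list_diag_prod atLeast0LessThan)
  ultimately show ?thesis
    unfolding embedding_det_def using det_mult[of "mat_diag ?n (\<lambda>j. \<sigma> j g)" ?n ?S] by simp
qed

lemma of_real_of_rat: "complex_of_real (real_of_rat q) = of_rat q"
  by (simp add: of_rat_eq_quotient)

lemma exists_scaling_into_lattice:
  assumes qM: "Q_indep eM" and sub: "set eL \<subseteq> Q_span eM"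
  shows "\<exists>c::nat. c > 0 \<and> (\<forall>x\<in>Z_span eL. of_nat c * x \<in> Z_span eM)"
proof -
  obtain D where D: "D > 0"
    "\<forall>p\<in>{..<length eL} \<times> {..<length eM}. of_int D * coord eM (eL ! fst p) (snd p) \<in> \<int>"
    using finite_common_denominator[of "{..<length eL} \<times> {..<length eM}"
        "\<lambda>p. coord eM (eL ! fst p) (snd p)"] by auto
  have "of_int D * e \<in> Z_span eM" if "e \<in> set eL" for e
  proof -
    obtain k where k: "k < length eL" "e = eL ! k" using \<open>e \<in> set eL\<close> by (auto simp: in_set_conv_nth)
    have eQ: "e \<in> Q_span eM" using that sub by blast
    then show ?thesis
      using D(2) k Q_span_scale[OF eQ, of "of_int D"]
      by (intro Z_span_if_coord_Ints[OF qM]) (auto simp: coord_int_mult[OF qM])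
  qed
  then have "set (map (\<lambda>e. of_int D * e) eL) \<subseteq> Z_span eM" by auto
  then have "(\<lambda>x. of_int D * x) ` Z_span eL \<subseteq> Z_span eM"
    unfolding Z_span_scaled_basis[symmetric] by (rule Z_span_mono)
  then show ?thesis using D(1) by (intro exI[of _ "nat D"]) auto
qed

context
  fixes K :: "complex set" and d :: nat and \<sigma> :: "nat \<Rightarrow> complex \<Rightarrow> complex"
    and eL eM :: "complex list" and L M :: "complex set"
  assumes nf: "number_field_of_degree K d"
    and embs: "\<And>j. j < d \<Longrightarrow> is_embedding K (\<sigma> j)"
    and BL: "Z_basis eL L" "positive_basis \<sigma> d eL" "L \<subseteq> K"
    and BM: "Z_basis eM M" "positive_basis \<sigma> d eM" "M \<subseteq> K"
begin

lemma lattice_basis_facts: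
  shows "is_subfield K" "length eL = d" "length eM = d" "Q_indep eL" "Q_indep eM"
    "Q_span eL = K" "Q_span eM = K" "set eL \<subseteq> K" "set eM \<subseteq> K"
    "Z_span eL = L" "Z_span eM = M"
proof -
  show "is_subfield K" using nf unfolding number_field_of_degree_def by simp
  show len: "length eL = d" "length eM = d"
    using BL(2) BM(2) unfolding positive_basis_def by simp_all
  show "Q_indep eL" "Q_span eL = K" using Z_basis_imp_Q_basis[OF nf BL(1) BL(3) len(1)] by simp_all
  show "Q_indep eM" "Q_span eM = K" using Z_basis_imp_Q_basis[OF nf BM(1) BM(3) len(2)] by simp_all
  show span: "Z_span eL = L" "Z_span eM = M" using BL(1) BM(1) unfolding Z_basis_def by simp_all
  show "set eL \<subseteq> K" using set_subset_Z_span[of eL] span(1) BL(3) by simp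
  show "set eM \<subseteq> K" using set_subset_Z_span[of eM] span(2) BM(3) by simp
qed

text \<open>Both sides are computed from the index \<open>[M : cL]\<close>, \<open>c\<close> the least positive integer with
  \<open>cL \<subseteq> M\<close>.\<close>

lemma frac_ideal_norm_eq_embedding_det_ratio:
  "complex_of_real (frac_ideal_norm M d L) = embedding_det \<sigma> eL / embedding_det \<sigma> eM"
proof -
  note B = lattice_basis_facts
  define c where "c = (LEAST c::nat. c > 0 \<and> (\<forall>x\<in>L. of_nat c * x \<in> M))"
  have "\<exists>c::nat. c > 0 \<and> (\<forall>x\<in>L. of_nat c * x \<in> M)"
    using exists_scaling_into_lattice[OF B(5), of eL] B(7,8,10,11) by simp
  then have "c > 0 \<and> (\<forall>x\<in>L. of_nat c * x \<in> M)" unfolding c_def by (rule LeastI_ex)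
  then have c: "c > 0" "\<forall>x\<in>L. of_nat c * x \<in> M" by simp_all
  define gs where "gs = map (\<lambda>e. of_int (int c) * e) eL"
  have cL: "(\<lambda>x. of_nat c * x) ` L = Z_span gs"
    unfolding gs_def Z_span_scaled_basis B(10) by simp
  have gsM: "set gs \<subseteq> Z_span eM"
    using set_subset_Z_span[of gs] c(2) unfolding cL[symmetric] B(11) by blast
  have len_gs: "length gs = length eM" unfolding gs_def using B(2,3) by simp
  have "embedding_det \<sigma> eM * of_rat (det_wrt eM gs) = embedding_det \<sigma> gs"
    by (rule embedding_det_change[OF B(1) _ B(5) B(9) len_gs, symmetric])
      (simp_all add: embs B(3) order.trans[OF gsM Z_span_subset_Q_span])
  also have "\<dots> = elt_norm \<sigma> d (of_nat c) * embedding_det \<sigma> eL"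
    using embedding_det_mult[OF B(1) _ B(8) subfield_of_nat[OF B(1)], of \<sigma> c] embs B(2)
    unfolding gs_def by simp
  also have "elt_norm \<sigma> d (of_nat c) = of_nat c ^ d"
    unfolding elt_norm_def using embedding_of_nat[OF B(1) embs] by simp
  finally have "(\<i> * embedding_det \<sigma> eM) * of_rat (det_wrt eM gs)
      = of_nat c ^ d * (\<i> * embedding_det \<sigma> eL)"
    by (simp add: algebra_simps)
  moreover obtain x y where xy: "\<i> * embedding_det \<sigma> eL = complex_of_real x"
      "\<i> * embedding_det \<sigma> eM = complex_of_real y" "x > 0" "y > 0"
    using positive_basis_embedding_det[OF BL(2)] positive_basis_embedding_det[OF BM(2)] by metis
  ultimately have "complex_of_real (real_of_rat (det_wrt eM gs)) = complex_of_real (real c ^ d * x / y)"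
    unfolding of_real_of_rat by (simp add: field_simps)
  then have det_gs: "real_of_rat (det_wrt eM gs) = real c ^ d * x / y"
    by (simp only: of_real_eq_iff)
  have "0 < real_of_rat (det_wrt eM gs)" unfolding det_gs using xy(3,4) c(1) by simp
  then have "det_wrt eM gs > 0" by (simp only: zero_less_of_rat_iff)
  then have idx: "of_nat (ideal_index M ((\<lambda>x. of_nat c * x) ` L)) = det_wrt eM gs"
    using ideal_index_eq_abs_det_wrt[of eM gs] BM(1) len_gs gsM
    unfolding Z_basis_def cL B(11) by simp
  have "frac_ideal_norm M d L = real_of_rat (det_wrt eM gs) / real c ^ d"
    unfolding frac_ideal_norm_def Let_def c_def[symmetric] idx[symmetric] of_rat_of_nat_eq ..
  then have "complex_of_real (frac_ideal_norm M d L) = (\<i> * embedding_det \<sigma> eL) / (\<i> * embedding_det \<sigma> eM)"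
    unfolding det_gs xy using c(1) by simp
  then show ?thesis by simp
qed

lemma coord_mult_relation:
  assumes d: "d = r + 2" and triL: "triangular_wrt eL u r g" and triM: "triangular_wrt eM u r 1"
    and u0: "u 0 = 1" and u: "\<And>j. j \<le> r \<Longrightarrow> u j \<in> K" and g: "g \<in> K" and v: "v \<in> K"
  shows "lam_wrt eL u r g * coord eL (g * v) (r + 1)
    = det_wrt eL (map ((*) g) eM) * (lam_wrt eM u r 1 * coord eM v (r + 1))"
proof (rule triangular_coord_mult[OF lattice_basis_facts(4,5) _ _ triL triM u0])
  note B = lattice_basis_facts
  show "length eL = r + 2" "length eM = r + 2" using B(2,3) d by simp_all
  show "u j \<in> Q_span eM" if "j \<le> r" for j using u[OF that] B(7) by simp
  show "v \<in> Q_span eM" using v B(7) by simp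
  show "g * eM ! l \<in> Q_span eL" if "l < r + 2" for l
  proof -
    have "eM ! l \<in> K" using nth_mem[of l eM] B(3,9) d that by auto
    then show ?thesis using subfield_mult[OF B(1) g] B(6) by simp
  qed
qed

lemma det_wrt_mult_eq_norm_ratio:
  assumes g: "g \<in> K" "g \<noteq> 0"
  shows "of_rat (det_wrt eL (map ((*) g) eM))
      = elt_norm \<sigma> d g / complex_of_real (frac_ideal_norm M d L)"
    and "det_wrt eL (map ((*) g) eM) \<noteq> 0"
proof -
  note B = lattice_basis_facts
  have gM: "set (map ((*) g) eM) \<subseteq> Q_span eL"
    using B(6,9) subfield_mult[OF B(1) g(1)] by auto
  have "embedding_det \<sigma> eL * of_rat (det_wrt eL (map ((*) g) eM)) = embedding_det \<sigma> (map ((*) g) eM)"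
    by (rule embedding_det_change[OF B(1) _ B(4) B(8) _ gM, symmetric]) (simp_all add: embs B(2,3))
  also have "\<dots> = elt_norm \<sigma> d g * embedding_det \<sigma> eM"
    using embedding_det_mult[OF B(1) _ B(9) g(1)] embs B(3) by simp
  finally have E: "embedding_det \<sigma> eL * of_rat (det_wrt eL (map ((*) g) eM))
    = elt_norm \<sigma> d g * embedding_det \<sigma> eM" .
  have nz: "embedding_det \<sigma> eL \<noteq> 0" "embedding_det \<sigma> eM \<noteq> 0"
    using BL(2) BM(2) unfolding positive_basis_iff by auto
  have "\<sigma> j g \<noteq> 0" if "j < d" for j using embedding_nonzero[OF B(1) embs[OF that] g] .
  then have "elt_norm \<sigma> d g \<noteq> 0" unfolding elt_norm_def by simp
  then show "det_wrt eL (map ((*) g) eM) \<noteq> 0" using E nz by auto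
  show "of_rat (det_wrt eL (map ((*) g) eM))
      = elt_norm \<sigma> d g / complex_of_real (frac_ideal_norm M d L)"
    unfolding frac_ideal_norm_eq_embedding_det_ratio using E nz by (simp add: field_simps)
qed

end

section \<open>Smith elementary divisors and dual families\<close>

definition int_mat :: "rat mat \<Rightarrow> bool" where
  "int_mat A \<longleftrightarrow> (\<forall>i<dim_row A. \<forall>j<dim_col A. A $$ (i, j) \<in> \<int>)"

lemma int_mat_lift:
  assumes "A \<in> carrier_mat n m" "int_mat A"
  obtains A' where "A' \<in> carrier_mat n m" "A = map_mat of_int A'"
proof
  show "map_mat floor A \<in> carrier_mat n m" using assms(1) by simp
  show "A = map_mat of_int (map_mat floor A)"
    using assms unfolding int_mat_def by (intro eq_matI) (auto elim!: Ints_cases)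
qed

lemma map_mat_of_int_inj: "map_mat (of_int :: int \<Rightarrow> rat) X = map_mat of_int Y \<Longrightarrow> X = Y"
proof (rule eq_matI)
  assume e: "map_mat (of_int :: int \<Rightarrow> rat) X = map_mat of_int Y"
  show d: "dim_row X = dim_row Y" "dim_col X = dim_col Y"
    using arg_cong[OF e, of dim_row] arg_cong[OF e, of dim_col] by auto
  fix i j assume "i < dim_row Y" "j < dim_col Y"
  then show "X $$ (i, j) = Y $$ (i, j)" using arg_cong[OF e, of "\<lambda>M. M $$ (i, j)"] d by simp
qed

text \<open>If \<open>PAQ = diag(D)\<close> with unimodular \<open>P, Q\<close> and \<open>AY = mI\<close>, then \<open>diag(D) (Q\<^sup>-\<^sup>1 Y P\<^sup>-\<^sup>1) = \<plusminus>mI\<close>,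
  and the last diagonal entry shows \<open>D (n - 1) dvd m\<close>.\<close>

lemma unimodular_diag_last_dvd:
  fixes P A Q Y :: "int mat"
  assumes P: "P \<in> carrier_mat n n" and A: "A \<in> carrier_mat n n" and Q: "Q \<in> carrier_mat n n"
    and Y: "Y \<in> carrier_mat n n" and n: "n > 0"
    and dP: "det P \<in> {1, -1}" and dQ: "det Q \<in> {1, -1}"
    and PAQ: "P * A * Q = mat n n (\<lambda>(i, j). if i = j then D i else 0)"
    and AY: "A * Y = m \<cdot>\<^sub>m 1\<^sub>m n"
  shows "D (n - 1) dvd m"
proof -
  define p where "p = n - 1"
  have p: "p < n" unfolding p_def using n by simp
  note aQ = adj_mat[OF Q] and aP = adj_mat[OF P]
  define Z where "Z = adj_mat Q * Y * adj_mat P"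
  have Z: "Z \<in> carrier_mat n n" unfolding Z_def using aQ(1) aP(1) Y by auto
  have "P * A * Q * Z = P * A * (Q * adj_mat Q) * Y * adj_mat P"
    unfolding Z_def using P A Q Y aQ(1) aP(1) by (simp add: assoc_mult_mat[of _ n n _ n _ n])
  also have "\<dots> = det Q \<cdot>\<^sub>m (P * (A * Y) * adj_mat P)"
    unfolding aQ(2) using P A Y aP(1)
    by (simp add: mult_smult_distrib[of _ n n _ n] mult_smult_assoc_mat[of _ n n _ n]
        assoc_mult_mat[of _ n n _ n _ n])
  also have "\<dots> = (det Q * m) \<cdot>\<^sub>m (P * adj_mat P)"
    unfolding AY using P aP(1)
    by (simp add: mult_smult_distrib[of _ n n _ n] mult_smult_assoc_mat[of _ n n _ n])
      (intro eq_matI, auto)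
  also have "\<dots> = (det Q * m * det P) \<cdot>\<^sub>m 1\<^sub>m n"
    unfolding aP(2) by (rule eq_matI) auto
  finally have DZ: "(P * A * Q * Z) $$ (p, p) = det Q * m * det P" using p by simp
  have "(P * A * Q * Z) $$ (p, p) = (\<Sum>k = 0..<n. (if p = k then D p else 0) * Z $$ (k, p))"
    unfolding PAQ using Z p by (simp add: scalar_prod_def)
  also have "\<dots> = (\<Sum>k = 0..<n. if k = p then D p * Z $$ (p, p) else 0)"
    by (intro sum.cong) auto
  also have "\<dots> = D p * Z $$ (p, p)" using p by simp
  finally have "D p dvd det Q * m * det P" using DZ by (metis dvd_triv_left)
  then show ?thesis unfolding p_def using dP dQ by auto
qed

lemma smith_last_divisor_dvd:
  assumes sm: "smith_elementary_divisors A n D" and n: "n > 0"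
    and A: "A \<in> carrier_mat n n" "int_mat A" and Y: "Y \<in> carrier_mat n n" "int_mat Y"
    and AY: "A * Y = of_int m \<cdot>\<^sub>m 1\<^sub>m n"
  shows "D (n - 1) dvd m"
proof -
  obtain P Q where P: "P \<in> carrier_mat n n" and Q: "Q \<in> carrier_mat n n"
    and PQi: "\<forall>i<n. \<forall>j<n. P $$ (i, j) \<in> \<int> \<and> Q $$ (i, j) \<in> \<int>"
    and dP: "det P \<in> {1, -1}" and dQ: "det Q \<in> {1, -1}"
    and PAQ: "P * A * Q = mat n n (\<lambda>(i, j). if i = j then of_int (D i) else 0)"
    using sm unfolding smith_elementary_divisors_def by blast
  obtain P' where P': "P' \<in> carrier_mat n n" "P = map_mat of_int P'"
    using int_mat_lift[OF P] PQi P unfolding int_mat_def by auto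
  obtain Q' where Q': "Q' \<in> carrier_mat n n" "Q = map_mat of_int Q'"
    using int_mat_lift[OF Q] PQi Q unfolding int_mat_def by auto
  obtain A' where A': "A' \<in> carrier_mat n n" "A = map_mat of_int A'" using int_mat_lift A by blast
  obtain Y' where Y': "Y' \<in> carrier_mat n n" "Y = map_mat of_int Y'" using int_mat_lift Y by blast
  have "map_mat of_int (P' * A' * Q') = map_mat (of_int :: int \<Rightarrow> rat) (mat n n (\<lambda>(i, j). if i = j then D i else 0))"
    using PAQ unfolding P'(2) A'(2) Q'(2)
    by (simp add: of_int_hom.mat_hom_mult[OF mult_carrier_mat[OF P'(1) A'(1)] Q'(1)]
        of_int_hom.mat_hom_mult[OF P'(1) A'(1)]) (intro eq_matI, auto)
  moreover have "map_mat of_int (A' * Y') = map_mat (of_int :: int \<Rightarrow> rat) (m \<cdot>\<^sub>m 1\<^sub>m n)"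
    using AY unfolding A'(2) Y'(2)
    by (simp add: of_int_hom.mat_hom_mult[OF A'(1) Y'(1)]) (intro eq_matI, auto)
  moreover have "det P' \<in> {1, -1}" "det Q' \<in> {1, -1}"
    using dP dQ unfolding P'(2) Q'(2) of_int_hom.hom_det by auto
  ultimately show ?thesis
    using unimodular_diag_last_dvd[OF P'(1) A'(1) Q'(1) Y'(1) n] map_mat_of_int_inj by blast
qed

lemma smith_elementary_divisors_pos:
  assumes sm: "smith_elementary_divisors A n D" and A: "A \<in> carrier_mat n n"
    and det: "det A \<noteq> 0" and i: "i < n"
  shows "D i > 0"
proof -
  obtain P Q where P: "P \<in> carrier_mat n n" and Q: "Q \<in> carrier_mat n n"
    and dPQ: "det P \<in> {1, -1}" "det Q \<in> {1, -1}"
    and PAQ: "P * A * Q = mat n n (\<lambda>(i, j). if i = j then of_int (D i) else 0)"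
    using sm unfolding smith_elementary_divisors_def by blast
  have "det (P * A * Q) = det P * det A * det Q"
    using det_mult[OF mult_carrier_mat[OF P A] Q] det_mult[OF P A] by simp
  also have "det (P * A * Q) = (\<Prod>i<n. of_int (D i))"
    unfolding PAQ
    by (subst det_lower_triangular[of n]) (auto simp: prod_list_diag_prod atLeast0LessThan)
  finally have "(\<Prod>i<n. (of_int (D i) :: rat)) \<noteq> 0" using dPQ det by auto
  then have "D i \<noteq> 0" using i by auto
  then show ?thesis using sm i unfolding smith_elementary_divisors_def by force
qed

lemma eq_0_if_coord_mult_basis_eq_0:
  assumes sf: "is_subfield K" and qi: "Q_indep es" and span: "Q_span es = K"
    and w: "w \<in> K" and i: "i < length es"
    and z: "\<And>l. l < length es \<Longrightarrow> coord es (w * es ! l) i = 0"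
  shows "w = 0"
proof (rule ccontr)
  assume w0: "w \<noteq> 0"
  have e: "es ! l \<in> K" if "l < length es" for l using Q_span_nth[OF that] span by simp
  have y: "es ! i / w \<in> K" using subfield_divide[OF sf e[OF i] w] .
  have "coord es (w * (es ! i / w)) i = (\<Sum>l<length es. coord es (w * es ! l) i * coord es (es ! i / w) l)"
    using y e span subfield_mult[OF sf w] by (intro coord_mult_expand[OF qi qi]) auto
  also have "\<dots> = 0" using z by simp
  finally show False using w0 coord_basis[OF qi i, of i] by simp
qed

lemma det_coeff_mat_nonzero:
  assumes sf: "is_subfield K" and qi: "Q_indep es" and len: "length es = r + 2"
    and span: "Q_span es = K" and uK: "\<And>j. j \<le> r \<Longrightarrow> u j \<in> K"
    and uindep: "Q_indep (map u [0..<r+1])"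
    and e0: "\<And>j. j \<le> r \<Longrightarrow> coord es (u j * es ! 0) (r + 1) = 0"
  shows "det (coeff_mat es u r (\<lambda>x. coord es x (r + 1))) \<noteq> 0"
proof
  let ?A = "coeff_mat es u r (\<lambda>x. coord es x (r + 1))"
  have A: "?A \<in> carrier_mat (r + 1) (r + 1)" unfolding coeff_mat_def by simp
  assume "det ?A = 0"
  then obtain v where v: "v \<in> carrier_vec (r + 1)" "v \<noteq> 0\<^sub>v (r + 1)"
      "transpose_mat ?A *\<^sub>v v = 0\<^sub>v (r + 1)"
    using det_0_iff_vec_prod_zero_field[of "transpose_mat ?A" "r + 1"] det_transpose[OF A] A by auto
  define w where "w = Q_comb (map u [0..<r+1]) (\<lambda>j. v $ j)"
  have wK: "w \<in> K" unfolding w_def by (rule Q_comb_in[OF sf]) (use uK in auto)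
  have "w \<noteq> 0"
  proof
    assume "w = 0"
    then have "\<forall>j<r + 1. v $ j = 0" using uindep unfolding Q_indep_def w_def by auto
    then show False using v(1,2) by (auto intro!: eq_vecI)
  qed
  have e: "es ! l \<in> K" if "l < r + 2" for l using Q_span_nth[of l es] that len span by simp
  have lin: "coord es (w * y) (r + 1) = (\<Sum>j<r+1. v $ j * coord es (u j * y) (r + 1))"
    if "y \<in> K" for y
    unfolding w_def using subfield_mult[OF sf uK that] span
    by (intro coord_Q_comb_map_mult[OF qi]) auto
  have "coord es (w * es ! l) (r + 1) = 0" if l: "l < length es" for l
  proof (cases l)
    case 0
    then show ?thesis using lin[OF e] e0 l len by simp
  next
    case (Suc k)
    have "(transpose_mat ?A *\<^sub>v v) $ k = 0" using v(3) Suc l len by simp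
    then have "(\<Sum>j<r+1. ?A $$ (j, k) * v $ j) = 0"
      using A v(1) Suc l len by (simp add: scalar_prod_def atLeast0LessThan)
    then show ?thesis using lin[OF e] Suc l len by (simp add: coeff_mat_def mult.commute)
  qed
  then show False using eq_0_if_coord_mult_basis_eq_0[OF sf qi span wK, of "r + 1"] \<open>w \<noteq> 0\<close> len
    by simp
qed

text \<open>A uniform dual family with value \<open>n\<close> gives \<open>\<A> Y = n I\<close> with \<open>Y\<close> the integral matrix
  of its coordinates.\<close>

lemma smith_last_divisor_dvd_dual_value:
  assumes qi: "Q_indep es" and len: "length es = r + 2"
    and uL: "\<And>j x. j \<le> r \<Longrightarrow> x \<in> Z_span es \<Longrightarrow> u j * x \<in> Z_span es"
    and e0: "\<And>j. j \<le> r \<Longrightarrow> coord es (u j * es ! 0) (r + 1) = 0"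
    and \<alpha>: "\<And>j. j \<le> r \<Longrightarrow> \<alpha> j \<in> Z_span es"
    and val: "\<And>j k. j \<le> r \<Longrightarrow> k \<le> r \<Longrightarrow> coord es (u k * \<alpha> j) (r + 1) = (if k = j then of_int n else 0)"
    and sm: "smith_elementary_divisors (coeff_mat es u r (\<lambda>x. coord es x (r + 1))) (r + 1) D"
  shows "D r dvd n"
proof -
  let ?A = "coeff_mat es u r (\<lambda>x. coord es x (r + 1))"
  define Y where "Y = mat (r + 1) (r + 1) (\<lambda>(i, j). coord es (\<alpha> j) (i + 1))"
  have A: "?A \<in> carrier_mat (r + 1) (r + 1)" and Y: "Y \<in> carrier_mat (r + 1) (r + 1)"
    unfolding coeff_mat_def Y_def by simp_all
  have ue: "u k * es ! l \<in> Z_span es" if "k \<le> r" "l < r + 2" for k l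
    using uL[OF that(1) Z_span_nth] that(2) len by simp
  have "int_mat ?A" "int_mat Y"
    using ue \<alpha> coord_Z_span[OF qi] unfolding int_mat_def coeff_mat_def Y_def by auto
  moreover have "?A * Y = of_int n \<cdot>\<^sub>m 1\<^sub>m (r + 1)"
  proof (rule eq_matI)
    fix k j assume "k < dim_row (of_int n \<cdot>\<^sub>m 1\<^sub>m (r + 1) :: rat mat)"
      "j < dim_col (of_int n \<cdot>\<^sub>m 1\<^sub>m (r + 1) :: rat mat)"
    then have kj: "k \<le> r" "j \<le> r" by auto
    have "coord es (u k * \<alpha> j) (r + 1)
        = (\<Sum>l<Suc (r + 1). coord es (u k * es ! l) (r + 1) * coord es (\<alpha> j) l)"
      using coord_mult_expand[OF qi qi, of "\<alpha> j" "u k"] \<alpha>[OF kj(2)] ue[OF kj(1)] len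
        Z_span_subset_Q_span by auto
    also have "\<dots> = (\<Sum>i<r + 1. coord es (u k * es ! (i + 1)) (r + 1) * coord es (\<alpha> j) (i + 1))"
      unfolding sum.lessThan_Suc_shift using e0[OF kj(1)] by simp
    also have "\<dots> = (?A * Y) $$ (k, j)"
      using A Y kj by (simp add: coeff_mat_def Y_def scalar_prod_def atLeast0LessThan)
    finally show "(?A * Y) $$ (k, j) = (of_int n \<cdot>\<^sub>m 1\<^sub>m (r + 1)) $$ (k, j)"
      using val[OF kj(2,1)] kj by simp
  qed (use A Y in auto)
  ultimately show ?thesis using smith_last_divisor_dvd[OF sm _ A _ Y] by simp
qed


lemma uniform_dual_value_multiple:
  assumes qi: "Q_indep es" and len: "length es = r + 2"
    and uL: "\<And>j x. j \<le> r \<Longrightarrow> x \<in> Z_span es \<Longrightarrow> u j * x \<in> Z_span es"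
    and e0: "\<And>j. j \<le> r \<Longrightarrow> coord es (u j * es ! 0) (r + 1) = 0"
    and \<alpha>: "\<And>j. j \<le> r \<Longrightarrow> \<alpha> j \<in> Z_span es"
    and val: "\<And>j k. j \<le> r \<Longrightarrow> k \<le> r \<Longrightarrow> coord es (u k * \<alpha> j) (r + 1) = (if k = j then V else 0)"
    and V: "V > 0"
    and sm: "smith_elementary_divisors (coeff_mat es u r (\<lambda>x. coord es x (r + 1))) (r + 1) D"
  shows "\<exists>l::int. l > 0 \<and> V = of_int (l * D r)"
proof -
  have "u 0 * \<alpha> 0 \<in> Z_span es" using uL \<alpha> by simp
  then have "V \<in> \<int>" using val[of 0 0] coord_Z_span[OF qi] by force
  then obtain n where n: "V = of_int n" by (auto elim: Ints_cases)
  then have "D r dvd n" using smith_last_divisor_dvd_dual_value[OF qi len uL e0 \<alpha> _ sm] val by simp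
  then obtain l where "n = l * D r" by (metis dvd_def mult.commute)
  moreover have "D r \<ge> 0" using sm unfolding smith_elementary_divisors_def by auto
  ultimately show ?thesis using n V by (auto simp: zero_less_mult_iff)
qed

theorem lemma13:
  fixes K :: "complex set" and r :: nat and \<sigma> :: "nat \<Rightarrow> complex \<Rightarrow> complex"
    and ff bb aa :: "complex set" and q :: int and N :: nat and h h' :: complex and m :: int
    and u :: "nat \<Rightarrow> complex" and eL eK :: "complex list"
    and A At :: "nat \<Rightarrow> int" and t tt :: int and \<alpha>t :: "nat \<Rightarrow> complex"
  defines "OK \<equiv> ring_of_integers K"
    and "L \<equiv> set_mult ff (frac_inv K (ring_of_integers K) bb)"
    and "lam \<equiv> lam_wrt eL u r h'"
    and "lamt \<equiv> lam_wrt eK u r 1"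
    and "alin \<equiv> lin_form eL u r h' (lam_wrt eL u r h')"
    and "alint \<equiv> lin_form eK u r 1 (lam_wrt eK u r 1)"
  assumes K: "number_field_of_degree K (r + 2)"
    and emb: "embeddings_one_complex_pair K r \<sigma>"
    and ff: "integral_ideal OK ff" "ff \<noteq> OK"
    and q: "q > 0" "{x \<in> ff. x \<in> \<int>} = {of_int (q * k) | k. True}"
    and bb: "integral_ideal OK bb" "coprime_ideals OK bb ff"
    and aa: "integral_ideal OK aa" "coprime_ideals OK aa (set_mult ff bb)"
    and N: "N = ideal_index OK aa"
    and cyc: "cyclic_quot (set_mult (frac_inv K OK aa) L) L"
    and adm: "admissible L (set_mult (frac_inv K OK aa) L) q N h"
    and hm: "m > 0" "h = of_int m * h'" "primitive_in L h'"
    and u0: "u 0 = 1"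
    and units: "\<forall>j\<in>{1..r}. is_unit_of OK (u j) \<and> totally_positive \<sigma> r (u j) \<and> u j - 1 \<in> ff"
    and fund: "\<forall>k :: nat \<Rightarrow> int. (\<Prod>j\<in>{1..r}. u j powi k j) = 1 \<longrightarrow> (\<forall>j\<in>{1..r}. k j = 0)"
    and uindep: "Q_indep (map u [0..<r+1])"
    and BL: "Z_basis eL L" "positive_basis \<sigma> (r + 2) eL" "triangular_wrt eL u r h'"
    and SA: "smith_elementary_divisors (coeff_mat eL u r alin) (r + 1) A" "A 0 = 1" "t = A r"
    and BK: "Z_basis eK OK" "positive_basis \<sigma> (r + 2) eK" "triangular_wrt eK u r 1"
    and SAt: "smith_elementary_divisors (coeff_mat eK u r alint) (r + 1) At" "At 0 = 1" "tt = At r"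
    and \<alpha>t: "\<forall>j\<le>r. \<alpha>t j \<in> OK \<and> coord eK (\<alpha>t j) 0 = 0
                 \<and> (\<forall>k\<le>r. alint (u k * \<alpha>t j) = (if k = j then of_int tt else 0))"
  shows "\<exists>\<epsilon>::int. \<epsilon> \<in> {1, -1}
     \<and> uniform_pos_dual_family L (\<lambda>j x. alin (u j * x)) r (\<lambda>j. of_int \<epsilon> * \<alpha>t j * h')
     \<and> (\<exists>l::int. l > 0
          \<and> (\<forall>j\<le>r. \<forall>k\<le>r. alin (u k * (of_int \<epsilon> * \<alpha>t j * h')) = (if k = j then of_int (l * t) else 0))
          \<and> of_rat (of_int \<epsilon> * lam * of_int l * of_int t)
              = elt_norm \<sigma> (r + 2) h' / complex_of_real (frac_ideal_norm OK (r + 2) L)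
                * of_rat lamt * of_int tt)"
proof -
  have sf: "is_subfield K" using K unfolding number_field_of_degree_def by simp
  have OKK: "OK \<subseteq> K" unfolding OK_def ring_of_integers_def by auto
  have ffid: "is_ideal OK ff" using ff(1) unfolding integral_ideal_def by simp
  then have "ff \<subseteq> K" using OKK unfolding is_ideal_def by auto
  then have LK: "L \<subseteq> K" unfolding L_def by (rule set_mult_frac_inv_subset[OF sf])
  have Lmod: "a * x \<in> L" if "a \<in> OK" "x \<in> L" for a x
    using set_mult_absorb[OF ffid that(1)] that(2) unfolding L_def OK_def by blast
  have h': "h' \<in> L" "h' \<noteq> 0" using hm(3) unfolding primitive_in_def by auto
  have uK: "u j \<in> K" and uL: "x \<in> L \<Longrightarrow> u j * x \<in> L" if "j \<le> r" for j x
    using units that u0 subfield_1[OF sf] OKK Lmod unfolding is_unit_of_def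
    by (cases "j = 0"; auto)+
  have embs: "is_embedding K (\<sigma> j)" if "j < r + 2" for j
    using emb that unfolding embeddings_one_complex_pair_def by auto
  note bases = K embs BL(1,2) LK BK(1,2) OKK
  note B = lattice_basis_facts[OF bases]
  have alin: "alin = (\<lambda>x. coord eL x (r + 1))"
    unfolding alin_def using lin_form_eq_coord[OF B(4) B(2) BL(3) u0] .
  have alint: "alint = (\<lambda>x. coord eK x (r + 1))"
    unfolding alint_def using lin_form_eq_coord[OF B(5) B(3) BK(3) u0] .
  have lam: "lam > 0" "lamt > 0" using lam_wrt_pos BL(3) BK(3) unfolding lam_def lamt_def by auto
  define \<delta> where "\<delta> = det_wrt eL (map ((*) h') eK)"
  have \<delta>: "of_rat \<delta> = elt_norm \<sigma> (r + 2) h' / complex_of_real (frac_ideal_norm OK (r + 2) L)"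
    "\<delta> \<noteq> 0"
    using det_wrt_mult_eq_norm_ratio[OF bases _ h'(2)] h'(1) LK unfolding \<delta>_def by auto
  have "det (coeff_mat eK u r alint) \<noteq> 0" unfolding alint
    using triangular_wrt_last_coord_eq_0[OF B(5) B(3) BK(3) u0] uK uindep
    by (intro det_coeff_mat_nonzero[OF sf B(5) B(3) B(7)])
  then have tt: "tt > 0" unfolding SAt(3)
    using smith_elementary_divisors_pos[OF SAt(1)] by (simp add: coeff_mat_def)
  define \<epsilon> :: int where "\<epsilon> = (if \<delta> > 0 then 1 else - 1)"
  define V where "V = \<bar>\<delta>\<bar> * lamt * of_int tt / lam"
  have \<alpha>L: "of_int \<epsilon> * \<alpha>t j * h' \<in> L" if "j \<le> r" for j
    using Z_span_int_mult[of "\<alpha>t j * h'" eL \<epsilon>] Lmod[of "\<alpha>t j" h'] \<alpha>t that h'(1) B(10)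
    by (simp add: mult.assoc)
  have val: "coord eL (u k * (of_int \<epsilon> * \<alpha>t j * h')) (r + 1) = (if k = j then V else 0)"
    if "j \<le> r" "k \<le> r" for j k
  proof -
    have y: "u k * \<alpha>t j \<in> K" using subfield_mult[OF sf uK] \<alpha>t OKK that by auto
    then have "lam * coord eL (h' * (of_int \<epsilon> * (u k * \<alpha>t j))) (r + 1)
        = \<delta> * (lamt * coord eK (of_int \<epsilon> * (u k * \<alpha>t j)) (r + 1))"
      using coord_mult_relation[OF bases refl BL(3) BK(3) u0 uK] subfield_mult[OF sf subfield_of_int[OF sf] y]
        h'(1) LK unfolding lam_def lamt_def \<delta>_def by auto
    also have "\<dots> = of_int \<epsilon> * \<delta> * lamt * (if k = j then of_int tt else 0)"
      using \<alpha>t that y B(7) unfolding alint by (simp add: coord_int_mult[OF B(5)])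
    finally show ?thesis using lam(1) unfolding V_def \<epsilon>_def by (auto simp: field_simps)
  qed
  have "V > 0" unfolding V_def using lam tt \<delta>(2) by (intro divide_pos_pos mult_pos_pos) auto
  then obtain l where l: "l > 0" "V = of_int (l * t)" unfolding SA(3)
    using uniform_dual_value_multiple[OF B(4) B(2) _ _ _ val _ SA(1)[unfolded alin]] uL \<alpha>L B(10)
      triangular_wrt_last_coord_eq_0[OF B(4) B(2) BL(3) u0] by auto
  have sign: "of_int \<epsilon> * \<bar>\<delta>\<bar> = \<delta>" unfolding \<epsilon>_def by auto
  have "of_int \<epsilon> * lam * of_int l * of_int t = of_int \<epsilon> * (lam * V)" using l(2) by simp
  also have "lam * V = \<bar>\<delta>\<bar> * lamt * of_int tt" unfolding V_def using lam(1) by simp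
  finally have "of_int \<epsilon> * lam * of_int l * of_int t = \<delta> * lamt * of_int tt"
    by (simp only: mult.assoc[symmetric] sign)
  then have "of_rat (of_int \<epsilon> * lam * of_int l * of_int t)
      = elt_norm \<sigma> (r + 2) h' / complex_of_real (frac_ideal_norm OK (r + 2) L) * of_rat lamt * of_int tt"
    using \<delta>(1) by (simp add: of_rat_mult)
  moreover have "uniform_pos_dual_family L (\<lambda>j x. alin (u j * x)) r (\<lambda>j. of_int \<epsilon> * \<alpha>t j * h')"
    unfolding uniform_pos_dual_family_def pos_dual_family_def alin using \<alpha>L val \<open>V > 0\<close> by simp
  moreover have "\<epsilon> \<in> {1, -1}" unfolding \<epsilon>_def by simp
  ultimately show ?thesis using l val unfolding alin by (intro exI[of _ \<epsilon>] conjI exI[of _ l]) auto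
qed

end
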